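(* Let $X$ be an SE-space with Freudenthal compactification $FX$ such that $w(FX\setminus X)\leq\aleph_0$. Then $FX$ is an Eberlein compact.
   Context: "Space" means topological $T_0$-space; $w$ denotes weight. A family of subsets of a set is strongly point-finite if every countably infinite subfamily contains a finite subfamily with empty intersection. A space $X$ is an SE-space if it has a strongly point-finite family $\alpha$ of clopen subsets such that $\alpha\cup\{X\setminus V:V\in\alpha\}$ is a subbase of $X$ (such spaces are zero-dimensional Hausdorff, hence rim-compact). For a rim-compact space $X$, the Freudenthal compactification $FX$ is the largest Hausdorff compactification of $X$ whose remainder is zero-dimensionally embedded. An Eberlein compact is a compact Hausdorff space homeomorphic to a weakly compact subset of a Banach space. *)

theory Defs
  imports "HOL-Analysis.Analysis"
begin

definition strongly_point_finite :: "'a set set \<Rightarrow> bool" where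
  "strongly_point_finite \<A> \<longleftrightarrow>
     (\<forall>\<B> \<subseteq> \<A>. countable \<B> \<and> infinite \<B> \<longrightarrow>
        (\<exists>\<C> \<subseteq> \<B>. finite \<C> \<and> \<C> \<noteq> {} \<and> \<Inter>\<C> = {}))"

definition subbase_of :: "'a set set \<Rightarrow> 'a topology \<Rightarrow> bool" where
  "subbase_of \<S> X \<longleftrightarrow> (\<forall>S \<in> \<S>. S \<subseteq> topspace X) \<and> topology_generated_by \<S> = X"

definition SE_space :: "'a topology \<Rightarrow> bool" where
  "SE_space X \<longleftrightarrow> t0_space X \<and>
     (\<exists>\<A>. (\<forall>V \<in> \<A>. closedin X V \<and> openin X V) \<and> strongly_point_finite \<A> \<and>
          subbase_of (\<A> \<union> {topspace X - V | V. V \<in> \<A>}) X)"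

definition hausdorff_compactification :: "'a topology \<Rightarrow> 'b topology \<Rightarrow> ('a \<Rightarrow> 'b) \<Rightarrow> bool" where
  "hausdorff_compactification X K e \<longleftrightarrow>
     compact_space K \<and> Hausdorff_space K \<and> embedding_map X K e \<and>
     K closure_of (e ` topspace X) = topspace K"

definition zero_dim_embedded :: "'b topology \<Rightarrow> 'b set \<Rightarrow> bool" where
  "zero_dim_embedded K Y \<longleftrightarrow>
     (\<forall>y \<in> Y. \<forall>U. openin K U \<and> y \<in> U \<longrightarrow>
        (\<exists>V. openin K V \<and> y \<in> V \<and> V \<subseteq> U \<and> K frontier_of V \<inter> Y = {}))"

definition zd_compactification :: "'a topology \<Rightarrow> 'b topology \<Rightarrow> ('a \<Rightarrow> 'b) \<Rightarrow> bool" where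
  "zd_compactification X K e \<longleftrightarrow>
     hausdorff_compactification X K e \<and>
     zero_dim_embedded K (topspace K - e ` topspace X)"

definition compactification_ge :: "'b topology \<Rightarrow> ('a \<Rightarrow> 'b) \<Rightarrow> 'c topology \<Rightarrow> ('a \<Rightarrow> 'c) \<Rightarrow> bool" where
  "compactification_ge K e K' e' \<longleftrightarrow>
     (\<exists>g. continuous_map K K' g \<and> (\<forall>x. g (e x) = e' x))"

text \<open>Competing
compactifications are taken with points in the type 'a set set; every Hausdorff
compactification of X has cardinality at most 2^2^|X| and is therefore equivalent to one of
these.\<close>
definition freudenthal_compactification :: "'a topology \<Rightarrow> 'b topology \<Rightarrow> ('a \<Rightarrow> 'b) \<Rightarrow> bool" where
  "freudenthal_compactification X FX e \<longleftrightarrow>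
     zd_compactification X FX e \<and>
     (\<forall>(K :: 'a set set topology) e'. zd_compactification X K e' \<longrightarrow>
        compactification_ge FX e K e')"

definition real_banach_str ::
  "'v set \<Rightarrow> ('v \<Rightarrow> 'v \<Rightarrow> 'v) \<Rightarrow> (real \<Rightarrow> 'v \<Rightarrow> 'v) \<Rightarrow> 'v \<Rightarrow> ('v \<Rightarrow> real) \<Rightarrow> bool" where
  "real_banach_str V add scl z nrm \<longleftrightarrow>
     z \<in> V \<and>
     (\<forall>x\<in>V. \<forall>y\<in>V. add x y \<in> V) \<and> (\<forall>a. \<forall>x\<in>V. scl a x \<in> V) \<and>
     (\<forall>x\<in>V. \<forall>y\<in>V. \<forall>w\<in>V. add (add x y) w = add x (add y w)) \<and>
     (\<forall>x\<in>V. \<forall>y\<in>V. add x y = add y x) \<and>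
     (\<forall>x\<in>V. add x z = x) \<and>
     (\<forall>x\<in>V. \<exists>y\<in>V. add x y = z) \<and>
     (\<forall>a. \<forall>x\<in>V. \<forall>y\<in>V. scl a (add x y) = add (scl a x) (scl a y)) \<and>
     (\<forall>a b. \<forall>x\<in>V. scl (a + b) x = add (scl a x) (scl b x)) \<and>
     (\<forall>a b. \<forall>x\<in>V. scl a (scl b x) = scl (a * b) x) \<and>
     (\<forall>x\<in>V. scl 1 x = x) \<and>
     (\<forall>x\<in>V. nrm x = 0 \<longleftrightarrow> x = z) \<and>
     (\<forall>a. \<forall>x\<in>V. nrm (scl a x) = \<bar>a\<bar> * nrm x) \<and>
     (\<forall>x\<in>V. \<forall>y\<in>V. nrm (add x y) \<le> nrm x + nrm y) \<and>
     (\<forall>s :: nat \<Rightarrow> 'v. (\<forall>n. s n \<in> V) \<and>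
          (\<forall>\<epsilon>>0. \<exists>N. \<forall>m\<ge>N. \<forall>n\<ge>N. nrm (add (s m) (scl (-1) (s n))) < \<epsilon>) \<longrightarrow>
          (\<exists>x\<in>V. \<forall>\<epsilon>>0. \<exists>N. \<forall>n\<ge>N. nrm (add (s n) (scl (-1) x)) < \<epsilon>))"

definition dual_functional ::
  "'v set \<Rightarrow> ('v \<Rightarrow> 'v \<Rightarrow> 'v) \<Rightarrow> (real \<Rightarrow> 'v \<Rightarrow> 'v) \<Rightarrow> ('v \<Rightarrow> real) \<Rightarrow> ('v \<Rightarrow> real) \<Rightarrow> bool" where
  "dual_functional V add scl nrm f \<longleftrightarrow>
     (\<forall>x\<in>V. \<forall>y\<in>V. f (add x y) = f x + f y) \<and>
     (\<forall>a. \<forall>x\<in>V. f (scl a x) = a * f x) \<and>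
     (\<exists>C. \<forall>x\<in>V. \<bar>f x\<bar> \<le> C * nrm x)"

definition weak_topology ::
  "'v set \<Rightarrow> ('v \<Rightarrow> 'v \<Rightarrow> 'v) \<Rightarrow> (real \<Rightarrow> 'v \<Rightarrow> 'v) \<Rightarrow> ('v \<Rightarrow> real) \<Rightarrow> 'v topology" where
  "weak_topology V add scl nrm =
     topology_generated_by
       {{x \<in> V. f x \<in> U} | f U. dual_functional V add scl nrm f \<and> open U}"

text \<open>The Banach space is taken with vectors in the type 'b => real, which is large enough
to carry (an isometric copy of) the closed span of any weakly compact set
homeomorphic to K.\<close>
definition eberlein_compact :: "'b topology \<Rightarrow> bool" where
  "eberlein_compact K \<longleftrightarrow>
     (\<exists>(V :: ('b \<Rightarrow> real) set) add scl z nrm S.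
        real_banach_str V add scl z nrm \<and> S \<subseteq> V \<and>
        compactin (weak_topology V add scl nrm) S \<and>
        K homeomorphic_space subtopology (weak_topology V add scl nrm) S)"

end

theory Submission
  imports Defs
begin

text \<open>Let \<A> witness that X is an SE-space.  Sending x to the finite set of members of \<A>
  containing it embeds X into the cube Pow \<A>, i.e. {0,1}^\<A>; the closure of the image is a
  zero-dimensional compactification, so by maximality FX maps onto it, injectively over X, and
  strong point-finiteness makes all its points finite sets.  The coordinates of this map,
  together with Urysohn functions separating the points of the second countable remainder
  (scaled by 1/(n+1)), form a bounded, point-separating family of continuous functions on FX
  of which, at each point, only finitely many exceed any \<epsilon> > 0.  Such a family embeds FX
  into c0(\<Gamma>) with its weak topology, so FX is an Eberlein compact.\<close>

section \<open>The Banach space c0(I)\<close>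

definition c0_space :: "'i set \<Rightarrow> ('i \<Rightarrow> real) set" where
  "c0_space I = {u. (\<forall>t. t \<notin> I \<longrightarrow> u t = 0) \<and> (\<forall>\<epsilon>>0. finite {t. \<epsilon> \<le> \<bar>u t\<bar>})}"

definition c0_add :: "('i \<Rightarrow> real) \<Rightarrow> ('i \<Rightarrow> real) \<Rightarrow> ('i \<Rightarrow> real)" where
  "c0_add u v = (\<lambda>t. u t + v t)"

definition c0_scale :: "real \<Rightarrow> ('i \<Rightarrow> real) \<Rightarrow> ('i \<Rightarrow> real)" where
  "c0_scale a u = (\<lambda>t. a * u t)"

definition c0_norm :: "('i \<Rightarrow> real) \<Rightarrow> real" where
  "c0_norm u = (SUP t. \<bar>u t\<bar>)"

definition c0_unit :: "'i \<Rightarrow> 'i \<Rightarrow> real" where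
  "c0_unit t = (\<lambda>s. if s = t then 1 else 0)"

definition c0_restrict :: "'i set \<Rightarrow> ('i \<Rightarrow> real) \<Rightarrow> ('i \<Rightarrow> real)" where
  "c0_restrict G w = (\<lambda>s. if s \<in> G then w s else 0)"

abbreviation c0_dual :: "'i set \<Rightarrow> (('i \<Rightarrow> real) \<Rightarrow> real) \<Rightarrow> bool" where
  "c0_dual I f \<equiv> dual_functional (c0_space I) c0_add c0_scale c0_norm f"

lemma c0_space_bdd_above:
  assumes "u \<in> c0_space I"
  shows "bdd_above (range (\<lambda>t. \<bar>u t\<bar>))"
proof -
  have fin: "finite {s. 1 \<le> \<bar>u s\<bar>}"
    using assms unfolding c0_space_def by auto
  have "\<bar>u t\<bar> \<le> max 1 (Max ((\<lambda>s. \<bar>u s\<bar>) ` {s. 1 \<le> \<bar>u s\<bar>}))" for t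
    using fin by (cases "1 \<le> \<bar>u t\<bar>") (auto intro: max.coboundedI2 Max_ge)
  then show ?thesis
    by (rule bdd_aboveI2)
qed

lemma c0_norm_upper: "u \<in> c0_space I \<Longrightarrow> \<bar>u t\<bar> \<le> c0_norm u"
  unfolding c0_norm_def by (rule cSUP_upper) (auto intro: c0_space_bdd_above)

lemma c0_norm_least: "(\<And>t. \<bar>u t\<bar> \<le> M) \<Longrightarrow> c0_norm u \<le> M"
  unfolding c0_norm_def by (rule cSUP_least) auto

lemma c0_norm_nonneg: "u \<in> c0_space I \<Longrightarrow> 0 \<le> c0_norm u"
  using c0_norm_upper[of u I undefined] by linarith

lemma c0_space_finite_support:
  assumes "finite G" "G \<subseteq> I" "\<And>s. s \<notin> G \<Longrightarrow> u s = 0"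
  shows "u \<in> c0_space I"
proof -
  have "finite {t. \<epsilon> \<le> \<bar>u t\<bar>}" if "\<epsilon> > 0" for \<epsilon>
    by (rule finite_subset[OF _ assms(1)]) (use assms(3) that in force)
  then show ?thesis
    unfolding c0_space_def using assms by auto
qed

lemma c0_space_zero: "(\<lambda>t. 0) \<in> c0_space I"
  unfolding c0_space_def by auto

lemma c0_unit_in_c0_space: "t \<in> I \<Longrightarrow> c0_unit t \<in> c0_space I"
  by (rule c0_space_finite_support[of "{t}"]) (auto simp: c0_unit_def)

lemma c0_restrict_in_c0_space: "finite G \<Longrightarrow> G \<subseteq> I \<Longrightarrow> c0_restrict G w \<in> c0_space I"
  by (rule c0_space_finite_support[of G]) (auto simp: c0_restrict_def)

lemma c0_space_add:
  assumes "u \<in> c0_space I" "v \<in> c0_space I"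
  shows "c0_add u v \<in> c0_space I"
proof -
  have "finite {t. \<epsilon> \<le> \<bar>u t + v t\<bar>}" if "\<epsilon> > 0" for \<epsilon>
  proof (rule finite_subset)
    show "{t. \<epsilon> \<le> \<bar>u t + v t\<bar>} \<subseteq> {t. \<epsilon>/2 \<le> \<bar>u t\<bar>} \<union> {t. \<epsilon>/2 \<le> \<bar>v t\<bar>}"
      by auto
    have "\<forall>\<epsilon>>0. finite {t. \<epsilon> \<le> \<bar>u t\<bar>}" "\<forall>\<epsilon>>0. finite {t. \<epsilon> \<le> \<bar>v t\<bar>}"
      using assms unfolding c0_space_def by auto
    then have "finite {t. \<epsilon>/2 \<le> \<bar>u t\<bar>}" "finite {t. \<epsilon>/2 \<le> \<bar>v t\<bar>}"
      using half_gt_zero[OF that] by meson+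
    then show "finite ({t. \<epsilon>/2 \<le> \<bar>u t\<bar>} \<union> {t. \<epsilon>/2 \<le> \<bar>v t\<bar>})"
      by simp
  qed
  then show ?thesis
    using assms unfolding c0_space_def c0_add_def by simp
qed

lemma c0_space_scale:
  assumes "u \<in> c0_space I"
  shows "c0_scale a u \<in> c0_space I"
proof (cases "a = 0")
  case True
  then show ?thesis
    unfolding c0_space_def c0_scale_def by auto
next
  case False
  have "finite {t. \<epsilon> \<le> \<bar>a * u t\<bar>}" if "\<epsilon> > 0" for \<epsilon>
  proof -
    have "{t. \<epsilon> \<le> \<bar>a * u t\<bar>} = {t. \<epsilon> / \<bar>a\<bar> \<le> \<bar>u t\<bar>}"
      using False by (auto simp: abs_mult field_simps)
    then show ?thesis
      using assms that False unfolding c0_space_def by auto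
  qed
  then show ?thesis
    using assms unfolding c0_space_def c0_scale_def by auto
qed

lemma c0_norm_scale:
  assumes "u \<in> c0_space I"
  shows "c0_norm (c0_scale a u) = \<bar>a\<bar> * c0_norm u"
proof (rule antisym)
  show "c0_norm (c0_scale a u) \<le> \<bar>a\<bar> * c0_norm u"
    by (rule c0_norm_least)
      (auto simp: c0_scale_def abs_mult intro: mult_left_mono c0_norm_upper[OF assms])
  show "\<bar>a\<bar> * c0_norm u \<le> c0_norm (c0_scale a u)"
  proof (cases "a = 0")
    case True
    then show ?thesis
      using c0_norm_nonneg[OF c0_space_scale[OF assms]] by simp
  next
    case False
    have "c0_norm u \<le> c0_norm (c0_scale a u) / \<bar>a\<bar>"
    proof (rule c0_norm_least)
      fix t
      have "\<bar>a\<bar> * \<bar>u t\<bar> \<le> c0_norm (c0_scale a u)"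
        using c0_norm_upper[OF c0_space_scale[OF assms], of a t]
        by (simp add: c0_scale_def abs_mult)
      then show "\<bar>u t\<bar> \<le> c0_norm (c0_scale a u) / \<bar>a\<bar>"
        using False by (simp add: field_simps)
    qed
    then show ?thesis
      using False by (simp add: field_simps)
  qed
qed

lemma c0_norm_triangle:
  assumes "u \<in> c0_space I" "v \<in> c0_space I"
  shows "c0_norm (c0_add u v) \<le> c0_norm u + c0_norm v"
proof (rule c0_norm_least)
  fix t
  have "\<bar>u t + v t\<bar> \<le> \<bar>u t\<bar> + \<bar>v t\<bar>"
    by (rule abs_triangle_ineq)
  also have "\<dots> \<le> c0_norm u + c0_norm v"
    using c0_norm_upper[OF assms(1)] c0_norm_upper[OF assms(2)] by (intro add_mono)
  finally show "\<bar>c0_add u v t\<bar> \<le> c0_norm u + c0_norm v"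
    by (simp add: c0_add_def)
qed

lemma c0_norm_eq_0_iff:
  assumes "u \<in> c0_space I"
  shows "c0_norm u = 0 \<longleftrightarrow> u = (\<lambda>t. 0)"
proof
  assume "c0_norm u = 0"
  then show "u = (\<lambda>t. 0)"
    using c0_norm_upper[OF assms] by (metis abs_le_zero_iff)
qed (simp add: c0_norm_def)

lemma c0_dist_upper:
  assumes "u \<in> c0_space I" "v \<in> c0_space I"
  shows "\<bar>u t - v t\<bar> \<le> c0_norm (c0_add u (c0_scale (-1) v))"
  using c0_norm_upper[OF c0_space_add[OF assms(1) c0_space_scale[OF assms(2), of "-1"]], of t]
  by (simp add: c0_add_def c0_scale_def)

lemma c0_space_uniform_limit:
  assumes vanish: "\<And>t. t \<notin> I \<Longrightarrow> x t = 0"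
    and approx: "\<And>\<epsilon>. \<epsilon> > 0 \<Longrightarrow> \<exists>u\<in>c0_space I. \<forall>t. \<bar>x t - u t\<bar> \<le> \<epsilon>"
  shows "x \<in> c0_space I"
  unfolding c0_space_def
proof (intro CollectI conjI allI impI)
  fix \<epsilon> :: real
  assume "\<epsilon> > 0"
  then obtain u where u: "u \<in> c0_space I" "\<And>t. \<bar>x t - u t\<bar> \<le> \<epsilon>/2"
    using approx[of "\<epsilon>/2"] by auto
  show "finite {t. \<epsilon> \<le> \<bar>x t\<bar>}"
  proof (rule finite_subset)
    show "{t. \<epsilon> \<le> \<bar>x t\<bar>} \<subseteq> {t. \<epsilon>/2 \<le> \<bar>u t\<bar>}"
    proof
      fix t
      assume "t \<in> {t. \<epsilon> \<le> \<bar>x t\<bar>}"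
      then show "t \<in> {t. \<epsilon>/2 \<le> \<bar>u t\<bar>}"
        using u(2)[of t] abs_triangle_ineq[of "x t - u t" "u t"] by simp
    qed
    have "\<forall>\<epsilon>>0. finite {t. \<epsilon> \<le> \<bar>u t\<bar>}"
      using u(1) unfolding c0_space_def by auto
    then show "finite {t. \<epsilon>/2 \<le> \<bar>u t\<bar>}"
      using \<open>\<epsilon> > 0\<close> by (meson half_gt_zero)
  qed
qed (rule vanish)

lemma c0_Cauchy_uniform_limit:
  fixes s :: "nat \<Rightarrow> 'i \<Rightarrow> real"
  assumes s: "\<forall>n. s n \<in> c0_space I"
    and cau: "\<forall>\<epsilon>>0. \<exists>N. \<forall>m\<ge>N. \<forall>n\<ge>N. c0_norm (c0_add (s m) (c0_scale (-1) (s n))) < \<epsilon>"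
  obtains x where "\<And>t. (\<lambda>n. s n t) \<longlonglongrightarrow> x t"
    and "\<And>\<epsilon>. \<epsilon> > 0 \<Longrightarrow> \<exists>N. \<forall>m\<ge>N. \<forall>t. \<bar>s m t - x t\<bar> \<le> \<epsilon>"
proof -
  let ?d = "\<lambda>m n. c0_norm (c0_add (s m) (c0_scale (-1) (s n)))"
  have diff: "\<bar>s m t - s n t\<bar> \<le> ?d m n" for m n t
    using s by (intro c0_dist_upper) auto
  have "Cauchy (\<lambda>n. s n t)" for t
  proof (rule CauchyI)
    fix \<epsilon> :: real
    assume "\<epsilon> > 0"
    then obtain N where N: "\<forall>m\<ge>N. \<forall>n\<ge>N. ?d m n < \<epsilon>"
      using cau by blast
    have "\<bar>s m t - s n t\<bar> < \<epsilon>" if "m \<ge> N" "n \<ge> N" for m n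
      using N that diff[of m t n] by fastforce
    then show "\<exists>M. \<forall>m\<ge>M. \<forall>n\<ge>M. norm (s m t - s n t) < \<epsilon>"
      by auto
  qed
  then obtain x where x: "\<And>t. (\<lambda>n. s n t) \<longlonglongrightarrow> x t"
    unfolding Cauchy_convergent_iff convergent_def by metis
  have "\<exists>N. \<forall>m\<ge>N. \<forall>t. \<bar>s m t - x t\<bar> \<le> \<epsilon>" if "\<epsilon> > 0" for \<epsilon>
  proof -
    obtain N where N: "\<forall>m\<ge>N. \<forall>n\<ge>N. ?d m n < \<epsilon>"
      using cau \<open>\<epsilon> > 0\<close> by blast
    have "\<bar>s m t - x t\<bar> \<le> \<epsilon>" if "m \<ge> N" for m t
    proof (rule tendsto_upperbound)
      show "(\<lambda>n. \<bar>s m t - s n t\<bar>) \<longlonglongrightarrow> \<bar>s m t - x t\<bar>"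
        by (intro tendsto_intros x)
      have "\<bar>s m t - s n t\<bar> \<le> \<epsilon>" if "n \<ge> N" for n
        using N \<open>m \<ge> N\<close> that diff[of m t n] by fastforce
      then show "\<forall>\<^sub>F n in sequentially. \<bar>s m t - s n t\<bar> \<le> \<epsilon>"
        unfolding eventually_sequentially by blast
    qed simp
    then show ?thesis
      by blast
  qed
  then show thesis
    using that x by blast
qed

lemma c0_complete:
  fixes s :: "nat \<Rightarrow> 'i \<Rightarrow> real"
  assumes s: "\<forall>n. s n \<in> c0_space I"
    and cau: "\<forall>\<epsilon>>0. \<exists>N. \<forall>m\<ge>N. \<forall>n\<ge>N. c0_norm (c0_add (s m) (c0_scale (-1) (s n))) < \<epsilon>"
  shows "\<exists>x\<in>c0_space I. \<forall>\<epsilon>>0. \<exists>N. \<forall>n\<ge>N. c0_norm (c0_add (s n) (c0_scale (-1) x)) < \<epsilon>"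
proof -
  obtain x where x: "\<And>t. (\<lambda>n. s n t) \<longlonglongrightarrow> x t"
    and close: "\<And>\<epsilon>. \<epsilon> > 0 \<Longrightarrow> \<exists>N. \<forall>m\<ge>N. \<forall>t. \<bar>s m t - x t\<bar> \<le> \<epsilon>"
    using c0_Cauchy_uniform_limit[OF s cau] by blast
  have "x \<in> c0_space I"
  proof (rule c0_space_uniform_limit)
    show "x t = 0" if "t \<notin> I" for t
      using x[of t] s that unfolding c0_space_def by (simp add: LIMSEQ_const_iff)
    show "\<exists>u\<in>c0_space I. \<forall>t. \<bar>x t - u t\<bar> \<le> \<epsilon>" if "\<epsilon> > 0" for \<epsilon>
    proof -
      obtain N where "\<forall>m\<ge>N. \<forall>t. \<bar>s m t - x t\<bar> \<le> \<epsilon>"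
        using close[OF \<open>\<epsilon> > 0\<close>] by blast
      then have "\<bar>x t - s N t\<bar> \<le> \<epsilon>" for t
        by (simp add: abs_minus_commute)
      then show ?thesis
        using s by blast
    qed
  qed
  moreover have "\<exists>N. \<forall>n\<ge>N. c0_norm (c0_add (s n) (c0_scale (-1) x)) < \<epsilon>" if "\<epsilon> > 0" for \<epsilon>
  proof -
    obtain N where N: "\<forall>m\<ge>N. \<forall>t. \<bar>s m t - x t\<bar> \<le> \<epsilon>/2"
      using close[of "\<epsilon>/2"] \<open>\<epsilon> > 0\<close> by auto
    have "c0_norm (c0_add (s n) (c0_scale (-1) x)) \<le> \<epsilon>/2" if "n \<ge> N" for n
      by (rule c0_norm_least) (use N that in \<open>simp add: c0_add_def c0_scale_def\<close>)
    then show ?thesis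
      using \<open>\<epsilon> > 0\<close> by (intro exI[of _ N]) (auto intro: le_less_trans[of _ "\<epsilon>/2"])
  qed
  ultimately show ?thesis
    by blast
qed

lemma real_banach_str_c0: "real_banach_str (c0_space I) c0_add c0_scale (\<lambda>t. 0) c0_norm"
  unfolding real_banach_str_def
proof (intro conjI ballI allI impI)
  fix x
  assume "x \<in> c0_space I"
  then show "\<exists>y\<in>c0_space I. c0_add x y = (\<lambda>t. 0)"
    using c0_space_scale[of x I "-1"]
    by (intro bexI[of _ "c0_scale (-1) x"]) (auto simp: c0_add_def c0_scale_def)
next
  fix s :: "nat \<Rightarrow> 'a \<Rightarrow> real"
  assume "(\<forall>n. s n \<in> c0_space I) \<and>
    (\<forall>\<epsilon>>0. \<exists>N. \<forall>m\<ge>N. \<forall>n\<ge>N. c0_norm (c0_add (s m) (c0_scale (- 1) (s n))) < \<epsilon>)"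
  then show "\<exists>x\<in>c0_space I. \<forall>\<epsilon>>0. \<exists>N. \<forall>n\<ge>N. c0_norm (c0_add (s n) (c0_scale (- 1) x)) < \<epsilon>"
    using c0_complete[of s I] by blast
qed (simp_all add: c0_space_zero c0_space_add c0_space_scale c0_norm_eq_0_iff c0_norm_scale
    c0_norm_triangle, auto simp: c0_add_def c0_scale_def algebra_simps)

lemma c0_dual_zero:
  assumes "c0_dual I f"
  shows "f (\<lambda>t. 0) = 0"
proof -
  have "f (c0_scale 0 (\<lambda>t. 0)) = 0 * f (\<lambda>t. 0)"
    using assms c0_space_zero unfolding dual_functional_def by blast
  then show ?thesis
    by (simp add: c0_scale_def)
qed

lemma c0_dual_restrict:
  assumes f: "c0_dual I f" and "finite G" "G \<subseteq> I"
  shows "f (c0_restrict G w) = (\<Sum>t\<in>G. w t * f (c0_unit t))"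
  using assms(2,3)
proof (induction G rule: finite_induct)
  case empty
  then show ?case
    using c0_dual_zero[OF f] by (simp add: c0_restrict_def)
next
  case (insert t G)
  have eq: "c0_restrict (insert t G) w = c0_add (c0_scale (w t) (c0_unit t)) (c0_restrict G w)"
    using insert.hyps by (auto simp: c0_restrict_def c0_add_def c0_scale_def c0_unit_def)
  have "c0_scale (w t) (c0_unit t) \<in> c0_space I" "c0_restrict G w \<in> c0_space I"
    using insert by (auto intro: c0_space_scale c0_unit_in_c0_space c0_restrict_in_c0_space)
  then have "f (c0_restrict (insert t G) w) = w t * f (c0_unit t) + f (c0_restrict G w)"
    using f c0_unit_in_c0_space[of t I] insert.prems unfolding eq dual_functional_def by simp
  then show ?case
    using insert by simp
qed

lemma c0_dual_bound:
  assumes "c0_dual I f"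
  obtains C where "C \<ge> 0" "\<And>x. x \<in> c0_space I \<Longrightarrow> \<bar>f x\<bar> \<le> C * c0_norm x"
proof -
  obtain C where C: "\<forall>x\<in>c0_space I. \<bar>f x\<bar> \<le> C * c0_norm x"
    using assms unfolding dual_functional_def by blast
  have "C * c0_norm x \<le> \<bar>C\<bar> * c0_norm x" if "x \<in> c0_space I" for x
    using c0_norm_nonneg[OF that] by (intro mult_right_mono) auto
  then show ?thesis
    using that[of "\<bar>C\<bar>"] C by force
qed

text \<open>Testing f against sign vectors shows that its values on the unit vectors are
  absolutely summable (the embedding of the dual of c0(I) into l1(I)).\<close>

lemma c0_dual_sum_abs_unit_le:
  assumes f: "c0_dual I f"
    and C: "\<And>x. x \<in> c0_space I \<Longrightarrow> \<bar>f x\<bar> \<le> C * c0_norm x" "C \<ge> 0"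
    and G: "finite G" "G \<subseteq> I"
  shows "(\<Sum>t\<in>G. \<bar>f (c0_unit t)\<bar>) \<le> C"
proof -
  define w where "w = c0_restrict G (\<lambda>s. sgn (f (c0_unit s)))"
  have "f w = (\<Sum>t\<in>G. sgn (f (c0_unit t)) * f (c0_unit t))"
    unfolding w_def using c0_dual_restrict[OF f G] by (simp add: c0_restrict_def)
  also have "\<dots> = (\<Sum>t\<in>G. \<bar>f (c0_unit t)\<bar>)"
    by (intro sum.cong refl) (simp add: abs_sgn mult.commute)
  finally have fw: "f w = (\<Sum>t\<in>G. \<bar>f (c0_unit t)\<bar>)" .
  have wV: "w \<in> c0_space I"
    unfolding w_def using G by (rule c0_restrict_in_c0_space)
  have "c0_norm w \<le> 1"
    by (rule c0_norm_least) (auto simp: w_def c0_restrict_def abs_sgn_eq)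
  then have "C * c0_norm w \<le> C"
    using C(2) by (simp add: mult_left_le)
  then show ?thesis
    using C(1)[OF wV] fw by linarith
qed

lemma bounded_finite_sums_small_tail:
  fixes a :: "'i \<Rightarrow> real"
  assumes bound: "\<And>G. finite G \<Longrightarrow> G \<subseteq> I \<Longrightarrow> (\<Sum>t\<in>G. \<bar>a t\<bar>) \<le> C" and "\<epsilon> > 0"
  obtains F where "finite F" "F \<subseteq> I"
    "\<And>G. finite G \<Longrightarrow> G \<subseteq> I \<Longrightarrow> G \<inter> F = {} \<Longrightarrow> (\<Sum>t\<in>G. \<bar>a t\<bar>) < \<epsilon>"
proof -
  define S where "S = {(\<Sum>t\<in>G. \<bar>a t\<bar>) | G. finite G \<and> G \<subseteq> I}"
  have "S \<noteq> {}" "bdd_above S"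
    using bound unfolding S_def bdd_above_def by blast+
  then obtain y where "y \<in> S" "Sup S - \<epsilon> < y"
    using less_cSupE[of "Sup S - \<epsilon>" S] \<open>\<epsilon> > 0\<close> by auto
  then obtain F where F: "finite F" "F \<subseteq> I" "Sup S - \<epsilon> < (\<Sum>t\<in>F. \<bar>a t\<bar>)"
    unfolding S_def by auto
  have "(\<Sum>t\<in>G. \<bar>a t\<bar>) < \<epsilon>" if G: "finite G" "G \<subseteq> I" "G \<inter> F = {}" for G
  proof -
    have "(\<Sum>t\<in>G. \<bar>a t\<bar>) + (\<Sum>t\<in>F. \<bar>a t\<bar>) = (\<Sum>t\<in>G \<union> F. \<bar>a t\<bar>)"
      using G F by (simp add: sum.union_disjoint)
    also have "\<dots> \<le> Sup S"
      using G F \<open>bdd_above S\<close> unfolding S_def by (intro cSup_upper) auto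
    finally show ?thesis
      using F(3) by linarith
  qed
  then show ?thesis
    using F that by blast
qed

lemma c0_dual_restrict_close:
  assumes f: "c0_dual I f" and C: "\<And>x. x \<in> c0_space I \<Longrightarrow> \<bar>f x\<bar> \<le> C * c0_norm x" "C \<ge> 0"
    and w: "w \<in> c0_space I" and G: "finite G" "G \<subseteq> I"
    and small: "\<And>t. t \<notin> G \<Longrightarrow> \<bar>w t\<bar> \<le> \<delta>" "\<delta> \<ge> 0"
  shows "\<bar>f w - (\<Sum>t\<in>G. w t * f (c0_unit t))\<bar> \<le> C * \<delta>"
proof -
  define r where "r = c0_add w (c0_scale (-1) (c0_restrict G w))"
  have r: "r \<in> c0_space I"
    unfolding r_def using w G by (intro c0_space_add c0_space_scale c0_restrict_in_c0_space)
  have "w = c0_add (c0_restrict G w) r"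
    by (auto simp: r_def c0_add_def c0_scale_def c0_restrict_def)
  then have "f w = (\<Sum>t\<in>G. w t * f (c0_unit t)) + f r"
    using f c0_restrict_in_c0_space[OF G] r c0_dual_restrict[OF f G]
    unfolding dual_functional_def by metis
  moreover have "c0_norm r \<le> \<delta>"
    by (rule c0_norm_least) (use small in \<open>auto simp: r_def c0_add_def c0_scale_def c0_restrict_def\<close>)
  then have "\<bar>f r\<bar> \<le> C * \<delta>"
    using C(1)[OF r] mult_left_mono[OF _ C(2)] by (meson order_trans)
  ultimately show ?thesis
    by simp
qed

text \<open>On the unit ball of c0(I) a continuous functional is uniformly approximated by a
  finite combination of coordinates: truncate the small coordinates, and control the remaining
  ones by the summable tail of the values of f on the unit vectors.\<close>

lemma c0_dual_approx:
  assumes f: "c0_dual I f" and "\<epsilon> > 0"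
  obtains F where "finite F" "F \<subseteq> I"
    "\<And>w. w \<in> c0_space I \<Longrightarrow> c0_norm w \<le> 1 \<Longrightarrow> \<bar>f w - (\<Sum>t\<in>F. w t * f (c0_unit t))\<bar> \<le> \<epsilon>"
proof -
  obtain C where C: "C \<ge> 0" "\<And>x. x \<in> c0_space I \<Longrightarrow> \<bar>f x\<bar> \<le> C * c0_norm x"
    using c0_dual_bound[OF f] by blast
  define a where "a t = f (c0_unit t)" for t
  obtain F where F: "finite F" "F \<subseteq> I"
    and tail: "\<And>G. finite G \<Longrightarrow> G \<subseteq> I \<Longrightarrow> G \<inter> F = {} \<Longrightarrow> (\<Sum>t\<in>G. \<bar>a t\<bar>) < \<epsilon>/2"
    using bounded_finite_sums_small_tail[of I a C "\<epsilon>/2"] c0_dual_sum_abs_unit_le[OF f C(2,1)]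
      \<open>\<epsilon> > 0\<close> unfolding a_def by auto
  define \<delta> where "\<delta> = \<epsilon> / (2 * (C + 1))"
  have \<delta>: "\<delta> > 0" "C * \<delta> \<le> \<epsilon>/2"
    unfolding \<delta>_def using C(1) \<open>\<epsilon> > 0\<close> by (auto simp: field_simps)
  have "\<bar>f w - (\<Sum>t\<in>F. w t * a t)\<bar> \<le> \<epsilon>" if w: "w \<in> c0_space I" "c0_norm w \<le> 1" for w
  proof -
    define G where "G = F \<union> {t. \<delta> \<le> \<bar>w t\<bar>}"
    have G: "finite G" "G \<subseteq> I" "F \<subseteq> G"
      unfolding G_def using F w \<delta> unfolding c0_space_def by force+
    have "\<bar>f w - (\<Sum>t\<in>G. w t * a t)\<bar> \<le> \<epsilon>/2"
      using c0_dual_restrict_close[OF f C(2,1) w(1) G(1,2), of \<delta>] \<delta>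
      unfolding a_def G_def by fastforce
    moreover have "(\<Sum>t\<in>G. w t * a t) = (\<Sum>t\<in>F. w t * a t) + (\<Sum>t\<in>G - F. w t * a t)"
      using G by (metis add.commute sum.subset_diff)
    moreover have "\<bar>\<Sum>t\<in>G - F. w t * a t\<bar> < \<epsilon>/2"
    proof -
      have "\<bar>w t * a t\<bar> \<le> \<bar>a t\<bar>" for t
        using c0_norm_upper[OF w(1), of t] w(2) by (simp add: abs_mult mult_left_le_one_le)
      then have "(\<Sum>t\<in>G - F. \<bar>w t * a t\<bar>) \<le> (\<Sum>t\<in>G - F. \<bar>a t\<bar>)"
        by (rule sum_mono)
      then have "\<bar>\<Sum>t\<in>G - F. w t * a t\<bar> \<le> (\<Sum>t\<in>G - F. \<bar>a t\<bar>)"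
        by (rule order_trans[OF sum_abs])
      also have "\<dots> < \<epsilon>/2"
        using G by (intro tail) auto
      finally show ?thesis .
    qed
    ultimately show ?thesis
      by linarith
  qed
  then show ?thesis
    using that F unfolding a_def by blast
qed

section \<open>Eberlein compacta from families of functions vanishing at infinity\<close>

lemma continuous_map_real_uniform_approx:
  fixes h :: "'a \<Rightarrow> real"
  assumes "\<And>\<epsilon>. \<epsilon> > 0 \<Longrightarrow> \<exists>g. continuous_map K euclideanreal g \<and> (\<forall>x\<in>topspace K. \<bar>h x - g x\<bar> \<le> \<epsilon>)"
  shows "continuous_map K euclideanreal h"
proof -
  have "\<forall>n. \<exists>g. continuous_map K euclideanreal g \<and>
      (\<forall>x\<in>topspace K. \<bar>h x - g x\<bar> \<le> inverse (real (Suc n)))"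
    using assms by simp
  then obtain g where g: "\<And>n. continuous_map K euclideanreal (g n)"
    "\<And>n x. x \<in> topspace K \<Longrightarrow> \<bar>h x - g n x\<bar> \<le> inverse (real (Suc n))"
    by metis
  have "\<forall>\<^sub>F n in sequentially. \<forall>x\<in>topspace K. h x \<in> UNIV \<and> dist (g n x) (h x) < \<epsilon>"
    if "\<epsilon> > 0" for \<epsilon>
  proof -
    obtain N where N: "inverse (Suc N) < \<epsilon>"
      using reals_Archimedean[OF \<open>\<epsilon> > 0\<close>] by blast
    have "dist (g n x) (h x) < \<epsilon>" if "n \<ge> N" "x \<in> topspace K" for n x
    proof -
      have "inverse (real (Suc n)) \<le> inverse (real (Suc N))"
        using that(1) by (simp add: field_simps)
      moreover have "dist (g n x) (h x) = \<bar>h x - g n x\<bar>"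
        by (simp add: dist_real_def abs_minus_commute)
      ultimately show ?thesis
        using g(2)[OF that(2), of n] N by linarith
    qed
    then show ?thesis
      unfolding eventually_sequentially by blast
  qed
  then have "continuous_map K Met_TC.mtopology h"
    using g(1) by (intro Met_TC.continuous_map_uniform_limit[where f = g and F = sequentially]) auto
  then show ?thesis
    by simp
qed

lemma dual_functional_zero: "dual_functional V add scl nrm (\<lambda>x. 0)"
  unfolding dual_functional_def by (auto intro!: exI[of _ 0])

lemma topspace_weak_topology: "topspace (weak_topology V add scl nrm) = V"
proof -
  have "V \<in> {{x \<in> V. f x \<in> U} | f U. dual_functional V add scl nrm f \<and> open U}"
    by (intro CollectI exI[of _ "\<lambda>x. 0"] exI[of _ UNIV]) (auto simp: dual_functional_zero)
  then show ?thesis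
    unfolding weak_topology_def by auto
qed

lemma continuous_map_weak_topology:
  assumes "\<phi> \<in> topspace K \<rightarrow> V"
    and "\<And>f. dual_functional V add scl nrm f \<Longrightarrow> continuous_map K euclideanreal (f \<circ> \<phi>)"
  shows "continuous_map K (weak_topology V add scl nrm) \<phi>"
  unfolding weak_topology_def
proof (rule continuous_on_generated_topo)
  fix B
  assume "B \<in> {{x \<in> V. f x \<in> U} | f U. dual_functional V add scl nrm f \<and> open U}"
  then obtain f U where fU: "B = {x \<in> V. f x \<in> U}" "dual_functional V add scl nrm f" "open U"
    by blast
  have "\<phi> -` B \<inter> topspace K = {p \<in> topspace K. (f \<circ> \<phi>) p \<in> U}"
    using assms(1) fU(1) by auto
  then show "openin K (\<phi> -` B \<inter> topspace K)"
    using assms(2)[OF fU(2)] fU(3) by (simp add: continuous_map_def)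
next
  show "\<phi> ` topspace K \<subseteq> \<Union> {{x \<in> V. f x \<in> U} | f U. dual_functional V add scl nrm f \<and> open U}"
    using assms(1) topspace_weak_topology[of V add scl nrm]
    by (simp add: weak_topology_def image_subset_iff Pi_iff)
qed

lemma Hausdorff_space_weak_topology:
  assumes "\<And>u v. u \<in> V \<Longrightarrow> v \<in> V \<Longrightarrow> u \<noteq> v \<Longrightarrow> \<exists>f. dual_functional V add scl nrm f \<and> f u \<noteq> f v"
  shows "Hausdorff_space (weak_topology V add scl nrm)"
  unfolding Hausdorff_space_def topspace_weak_topology
proof (intro allI impI, elim conjE)
  fix u v
  assume "u \<in> V" "v \<in> V" "u \<noteq> v"
  then obtain f where f: "dual_functional V add scl nrm f" "f u \<noteq> f v"
    using assms by blast
  obtain S T where ST: "open S" "open T" "f u \<in> S" "f v \<in> T" "S \<inter> T = {}"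
    using hausdorff[OF f(2)] by blast
  have "openin (weak_topology V add scl nrm) {x \<in> V. f x \<in> W}" if "open W" for W
    unfolding weak_topology_def using f(1) that
    by (intro topology_generated_by_Basis CollectI exI[of _ f] exI[of _ W]) simp
  then show "\<exists>U W. openin (weak_topology V add scl nrm) U \<and> openin (weak_topology V add scl nrm) W \<and>
      u \<in> U \<and> v \<in> W \<and> disjnt U W"
    using ST \<open>u \<in> V\<close> \<open>v \<in> V\<close>
    by (intro exI[of _ "{x \<in> V. f x \<in> S}"] exI[of _ "{x \<in> V. f x \<in> T}"]) (auto simp: disjnt_def)
qed

lemma c0_dual_coordinate: "c0_dual I (\<lambda>x. x t)"
  unfolding dual_functional_def by (auto simp: c0_add_def c0_scale_def intro!: exI[of _ 1] c0_norm_upper)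

lemma Hausdorff_space_weak_topology_c0:
  fixes I :: "'i set"
  shows "Hausdorff_space (weak_topology (c0_space I) c0_add c0_scale c0_norm)"
proof (rule Hausdorff_space_weak_topology)
  fix u v :: "'i \<Rightarrow> real"
  assume "u \<noteq> v"
  then obtain t where "u t \<noteq> v t"
    by (auto simp: fun_eq_iff)
  then show "\<exists>f. c0_dual I f \<and> f u \<noteq> f v"
    by (intro exI[of _ "\<lambda>x. x t"]) (simp add: c0_dual_coordinate)
qed

lemma continuous_map_weak_topology_c0:
  assumes \<phi>: "\<And>p. p \<in> topspace K \<Longrightarrow> \<phi> p \<in> c0_space I \<and> c0_norm (\<phi> p) \<le> 1"
    and coordinates: "\<And>t. t \<in> I \<Longrightarrow> continuous_map K euclideanreal (\<lambda>p. \<phi> p t)"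
  shows "continuous_map K (weak_topology (c0_space I) c0_add c0_scale c0_norm) \<phi>"
proof (rule continuous_map_weak_topology)
  show "\<phi> \<in> topspace K \<rightarrow> c0_space I"
    using \<phi> by blast
  fix f
  assume f: "c0_dual I f"
  show "continuous_map K euclideanreal (f \<circ> \<phi>)"
  proof (rule continuous_map_real_uniform_approx)
    fix \<epsilon> :: real
    assume "\<epsilon> > 0"
    then obtain F where F: "finite F" "F \<subseteq> I"
      "\<And>w. w \<in> c0_space I \<Longrightarrow> c0_norm w \<le> 1 \<Longrightarrow> \<bar>f w - (\<Sum>t\<in>F. w t * f (c0_unit t))\<bar> \<le> \<epsilon>"
      using c0_dual_approx[OF f] by blast
    have "continuous_map K euclideanreal (\<lambda>p. \<Sum>t\<in>F. \<phi> p t * f (c0_unit t))"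
      using F coordinates by (intro continuous_map_sum continuous_map_real_mult_right) auto
    moreover have "\<forall>p\<in>topspace K. \<bar>(f \<circ> \<phi>) p - (\<Sum>t\<in>F. \<phi> p t * f (c0_unit t))\<bar> \<le> \<epsilon>"
      using F(3) \<phi> by simp
    ultimately show "\<exists>g. continuous_map K euclideanreal g \<and> (\<forall>p\<in>topspace K. \<bar>(f \<circ> \<phi>) p - g p\<bar> \<le> \<epsilon>)"
      by blast
  qed
qed

text \<open>K embeds into c0(I) with its weak topology via p \<mapsto> (\<lambda>t. c t p).  The index set I
  lives in 'b because eberlein_compact asks for a Banach space of functions 'b \<Rightarrow> real.\<close>

lemma eberlein_compactI_c0:
  fixes K :: "'b topology" and I :: "'b set" and c :: "'b \<Rightarrow> 'b \<Rightarrow> real"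
  assumes K: "compact_space K" "Hausdorff_space K"
    and cont: "\<And>t. t \<in> I \<Longrightarrow> continuous_map K euclideanreal (c t)"
    and bounded: "\<And>t p. t \<in> I \<Longrightarrow> p \<in> topspace K \<Longrightarrow> \<bar>c t p\<bar> \<le> 1"
    and vanishing: "\<And>p \<epsilon>. p \<in> topspace K \<Longrightarrow> \<epsilon> > 0 \<Longrightarrow> finite {t\<in>I. \<epsilon> \<le> \<bar>c t p\<bar>}"
    and separating: "\<And>p q. p \<in> topspace K \<Longrightarrow> q \<in> topspace K \<Longrightarrow> p \<noteq> q \<Longrightarrow> \<exists>t\<in>I. c t p \<noteq> c t q"
  shows "eberlein_compact K"
proof -
  define \<phi> where "\<phi> p = (\<lambda>t. if t \<in> I then c t p else 0)" for p
  define W where "W = weak_topology (c0_space I) c0_add c0_scale c0_norm"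
  have \<phi>: "\<phi> p \<in> c0_space I \<and> c0_norm (\<phi> p) \<le> 1" if "p \<in> topspace K" for p
  proof
    have "{t. \<epsilon> \<le> \<bar>\<phi> p t\<bar>} = {t\<in>I. \<epsilon> \<le> \<bar>c t p\<bar>}" if "\<epsilon> > 0" for \<epsilon>
      using that by (auto simp: \<phi>_def)
    then show "\<phi> p \<in> c0_space I"
      unfolding c0_space_def using vanishing[OF that] by (auto simp: \<phi>_def)
    show "c0_norm (\<phi> p) \<le> 1"
      by (rule c0_norm_least) (auto simp: \<phi>_def bounded[OF _ that])
  qed
  have "continuous_map K W \<phi>"
    unfolding W_def
  proof (rule continuous_map_weak_topology_c0)
    show "\<phi> p \<in> c0_space I \<and> c0_norm (\<phi> p) \<le> 1" if "p \<in> topspace K" for p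
      using \<phi>[OF that] .
    show "continuous_map K euclideanreal (\<lambda>p. \<phi> p t)" if "t \<in> I" for t
      using cont[OF that] that by (simp add: \<phi>_def)
  qed
  moreover have "inj_on \<phi> (topspace K)"
  proof (rule inj_onI, rule ccontr)
    fix p q
    assume "p \<in> topspace K" "q \<in> topspace K" "\<phi> p = \<phi> q" "p \<noteq> q"
    then obtain t where "t \<in> I" "c t p \<noteq> c t q"
      using separating by blast
    then have "\<phi> p t \<noteq> \<phi> q t"
      by (simp add: \<phi>_def)
    then show False
      using \<open>\<phi> p = \<phi> q\<close> by simp
  qed
  ultimately have "embedding_map K W \<phi>"
    using K(1) Hausdorff_space_weak_topology_c0 continuous_imp_embedding_map unfolding W_def by blast
  then have "K homeomorphic_space subtopology W (\<phi> ` topspace K)"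
    unfolding embedding_map_def by (rule homeomorphic_map_imp_homeomorphic_space)
  moreover have "compactin W (\<phi> ` topspace K)"
    using K(1) \<open>continuous_map K W \<phi>\<close> by (simp add: compact_space_def image_compactin)
  moreover have "\<phi> ` topspace K \<subseteq> c0_space I"
    using \<phi> by blast
  ultimately show ?thesis
    unfolding eberlein_compact_def W_def using real_banach_str_c0 by blast
qed

lemma eberlein_compactI:
  fixes K :: "'b topology" and \<Gamma> :: "'c set" and c :: "'c \<Rightarrow> 'b \<Rightarrow> real" and \<iota> :: "'c \<Rightarrow> 'b"
  assumes K: "compact_space K" "Hausdorff_space K" and \<iota>: "inj_on \<iota> \<Gamma>"
    and cont: "\<And>\<gamma>. \<gamma> \<in> \<Gamma> \<Longrightarrow> continuous_map K euclideanreal (c \<gamma>)"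
    and bounded: "\<And>\<gamma> p. \<gamma> \<in> \<Gamma> \<Longrightarrow> p \<in> topspace K \<Longrightarrow> \<bar>c \<gamma> p\<bar> \<le> 1"
    and vanishing: "\<And>p \<epsilon>. p \<in> topspace K \<Longrightarrow> \<epsilon> > 0 \<Longrightarrow> finite {\<gamma>\<in>\<Gamma>. \<epsilon> \<le> \<bar>c \<gamma> p\<bar>}"
    and separating: "\<And>p q. p \<in> topspace K \<Longrightarrow> q \<in> topspace K \<Longrightarrow> p \<noteq> q \<Longrightarrow> \<exists>\<gamma>\<in>\<Gamma>. c \<gamma> p \<noteq> c \<gamma> q"
  shows "eberlein_compact K"
proof (rule eberlein_compactI_c0[OF K, where I = "\<iota> ` \<Gamma>" and c = "\<lambda>t. c (the_inv_into \<Gamma> \<iota> t)"])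
  have inv: "the_inv_into \<Gamma> \<iota> (\<iota> \<gamma>) = \<gamma>" if "\<gamma> \<in> \<Gamma>" for \<gamma>
    using the_inv_into_f_f[OF \<iota> that] .
  show "continuous_map K euclideanreal (c (the_inv_into \<Gamma> \<iota> t))" if "t \<in> \<iota> ` \<Gamma>" for t
    using that cont inv by auto
  show "\<bar>c (the_inv_into \<Gamma> \<iota> t) p\<bar> \<le> 1" if "t \<in> \<iota> ` \<Gamma>" "p \<in> topspace K" for t p
    using that bounded inv by auto
  show "finite {t \<in> \<iota> ` \<Gamma>. \<epsilon> \<le> \<bar>c (the_inv_into \<Gamma> \<iota> t) p\<bar>}" if "p \<in> topspace K" "\<epsilon> > 0" for p \<epsilon>
  proof -
    have "{t \<in> \<iota> ` \<Gamma>. \<epsilon> \<le> \<bar>c (the_inv_into \<Gamma> \<iota> t) p\<bar>} = \<iota> ` {\<gamma>\<in>\<Gamma>. \<epsilon> \<le> \<bar>c \<gamma> p\<bar>}"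
      using inv by force
    then show ?thesis
      using vanishing[OF that] by simp
  qed
  show "\<exists>t\<in>\<iota> ` \<Gamma>. c (the_inv_into \<Gamma> \<iota> t) p \<noteq> c (the_inv_into \<Gamma> \<iota> t) q"
    if "p \<in> topspace K" "q \<in> topspace K" "p \<noteq> q" for p q
    using separating[OF that] inv by force
qed

lemma eberlein_compact_finite:
  assumes "finite (topspace K)" "Hausdorff_space K"
  shows "eberlein_compact K"
proof (rule eberlein_compactI[where \<Gamma> = "topspace K" and \<iota> = id
      and c = "\<lambda>t p. if p = t then 1 else 0"])
  have discrete: "K = discrete_topology (topspace K)"
    using finite_topspace_imp_discrete_topology[OF refl assms] by simp
  show "continuous_map K euclideanreal (\<lambda>p. if p = t then 1 else 0)" for t
    by (subst discrete) simp
  show "compact_space K"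
    using assms(1) by (simp add: compact_space_def finite_imp_compactin)
qed (use assms in auto)

section \<open>Generated topologies and the cube of subsets\<close>

lemma topology_generated_by_local_base:
  assumes "openin (topology_generated_by \<S>) U" "y \<in> U"
  obtains \<F> where "finite \<F>" "\<F> \<noteq> {}" "\<F> \<subseteq> \<S>" "y \<in> \<Inter>\<F>" "\<Inter>\<F> \<subseteq> U"
proof -
  have "(arbitrary union_of finite' intersection_of (\<lambda>x. x \<in> \<S>)) U"
    using openin_topology_generated_by[OF assms(1)] by (simp add: generate_topology_on_eq)
  then obtain \<U> where \<U>: "\<forall>W\<in>\<U>. (finite' intersection_of (\<lambda>x. x \<in> \<S>)) W" "\<Union>\<U> = U"
    unfolding union_of_def by auto
  with assms(2) obtain W where W: "W \<in> \<U>" "y \<in> W"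
    by blast
  then have "(finite' intersection_of (\<lambda>x. x \<in> \<S>)) W"
    using \<U>(1) by blast
  then obtain \<F> where "finite \<F>" "\<F> \<noteq> {}" "\<F> \<subseteq> \<S>" "\<Inter>\<F> = W"
    by (auto simp: intersection_of_def)
  then show thesis
    using that W \<U>(2) by blast
qed

lemma continuous_map_clopen_indicator:
  assumes "openin K S" "closedin K S"
  shows "continuous_map K euclideanreal (\<lambda>x. if x \<in> S then 1 else (0::real))"
  unfolding continuous_map_def
proof (intro conjI allI impI)
  fix U :: "real set"
  have "{x \<in> topspace K. (if x \<in> S then 1 else 0) \<in> U} =
      (if 1 \<in> U then S else {}) \<union> (if 0 \<in> U then topspace K - S else {})"
    using openin_subset[OF assms(1)] by auto
  then show "openin K {x \<in> topspace K. (if x \<in> S then 1 else 0) \<in> U}"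
    using assms by auto
qed auto

text \<open>Pow A carries the product topology of {0,1}^A, a subset being identified with its
  indicator function.\<close>

definition cube_subbase :: "'v set \<Rightarrow> 'v set set set" where
  "cube_subbase A = {{C \<in> Pow A. v \<in> C} | v. v \<in> A} \<union> {{C \<in> Pow A. v \<notin> C} | v. v \<in> A} \<union> {Pow A}"

definition cube :: "'v set \<Rightarrow> 'v set topology" where
  "cube A = topology_generated_by (cube_subbase A)"

lemma cube_subbaseE:
  assumes "U \<in> cube_subbase A"
  obtains v where "v \<in> A" "U = {C \<in> Pow A. v \<in> C}" | v where "v \<in> A" "U = {C \<in> Pow A. v \<notin> C}"
    | "U = Pow A"
  using assms unfolding cube_subbase_def by blast

lemma topspace_cube [simp]: "topspace (cube A) = Pow A"
  unfolding cube_def cube_subbase_def by auto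

lemma openin_cube_mem: "v \<in> A \<Longrightarrow> openin (cube A) {C \<in> Pow A. v \<in> C}"
  unfolding cube_def by (rule topology_generated_by_Basis) (auto simp: cube_subbase_def)

lemma openin_cube_not_mem: "v \<in> A \<Longrightarrow> openin (cube A) {C \<in> Pow A. v \<notin> C}"
  unfolding cube_def by (rule topology_generated_by_Basis) (auto simp: cube_subbase_def)

lemma closedin_cube_mem: "v \<in> A \<Longrightarrow> closedin (cube A) {C \<in> Pow A. v \<in> C}"
  unfolding closedin_def using openin_cube_not_mem[of v A]
  by (auto elim!: back_subst[where P = "openin (cube A)"])

lemma closedin_cube_not_mem: "v \<in> A \<Longrightarrow> closedin (cube A) {C \<in> Pow A. v \<notin> C}"
  unfolding closedin_def using openin_cube_mem[of v A]
  by (auto elim!: back_subst[where P = "openin (cube A)"])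

lemma cube_clopen_base:
  assumes "openin (cube A) U" "y \<in> U"
  obtains W where "openin (cube A) W" "closedin (cube A) W" "y \<in> W" "W \<subseteq> U"
proof -
  obtain \<F> where \<F>: "finite \<F>" "\<F> \<noteq> {}" "\<F> \<subseteq> cube_subbase A" "y \<in> \<Inter>\<F>" "\<Inter>\<F> \<subseteq> U"
    using topology_generated_by_local_base assms unfolding cube_def by metis
  have "openin (cube A) S \<and> closedin (cube A) S" if "S \<in> cube_subbase A" for S
    using that openin_cube_mem openin_cube_not_mem closedin_cube_mem closedin_cube_not_mem
    unfolding cube_subbase_def by (auto simp del: topspace_cube simp: topspace_cube[symmetric])
  then have "openin (cube A) (\<Inter>\<F>)" "closedin (cube A) (\<Inter>\<F>)"
    using \<F> by (auto intro!: openin_Inter closedin_Inter)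
  then show thesis
    using that \<F> by blast
qed

lemma Hausdorff_space_cube: "Hausdorff_space (cube A)"
  unfolding Hausdorff_space_def topspace_cube
proof (intro allI impI, elim conjE)
  fix C D
  assume "C \<in> Pow A" "D \<in> Pow A" "C \<noteq> D"
  then obtain v where v: "v \<in> A" "v \<in> C \<longleftrightarrow> v \<notin> D"
    by blast
  let ?In = "{C \<in> Pow A. v \<in> C}" and ?Out = "{C \<in> Pow A. v \<notin> C}"
  have "disjnt ?In ?Out" "disjnt ?Out ?In"
    by (auto simp: disjnt_def)
  then show "\<exists>U W. openin (cube A) U \<and> openin (cube A) W \<and> C \<in> U \<and> D \<in> W \<and> disjnt U W"
    using \<open>C \<in> Pow A\<close> \<open>D \<in> Pow A\<close> v openin_cube_mem[OF v(1)] openin_cube_not_mem[OF v(1)]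
    by (cases "v \<in> C") (blast, blast)
qed

lemma cube_homeomorphic_product:
  "cube A homeomorphic_space product_topology (\<lambda>_. discrete_topology (UNIV :: bool set)) A"
  (is "_ homeomorphic_space ?P")
proof -
  define ind where "ind C = restrict (\<lambda>v. v \<in> C) A" for C
  define set_of where "set_of f = {v \<in> A. f v}" for f :: "_ \<Rightarrow> bool"
  have "continuous_map (cube A) (discrete_topology UNIV) (\<lambda>C. ind C v)" if "v \<in> A" for v
  proof -
    have "{C \<in> Pow A. ind C v \<in> B} =
        (if True \<in> B then {C \<in> Pow A. v \<in> C} else {}) \<union> (if False \<in> B then {C \<in> Pow A. v \<notin> C} else {})"
      for B
      using that unfolding ind_def by (auto simp: if_split_mem1 split: if_splits) (metis (full_types))+
    then show ?thesis
      unfolding continuous_map_def using openin_cube_mem[OF that] openin_cube_not_mem[OF that] by auto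
  qed
  then have "continuous_map (cube A) ?P ind"
    unfolding continuous_map_componentwise by (auto simp: ind_def)
  moreover have "continuous_map ?P (cube A) set_of"
    unfolding cube_def
  proof (rule continuous_on_generated_topo)
    have preimage: "openin ?P {f \<in> topspace ?P. f v \<in> {b}}" if "v \<in> A" for v b
      by (rule openin_continuous_map_preimage[OF continuous_map_product_projection[OF that]]) simp
    fix U
    assume "U \<in> cube_subbase A"
    then show "openin ?P (set_of -` U \<inter> topspace ?P)"
    proof (cases rule: cube_subbaseE)
      case (1 v)
      then have eq: "set_of -` U \<inter> topspace ?P = {f \<in> topspace ?P. f v \<in> {True}}"
        by (auto simp: set_of_def)
      show ?thesis
        unfolding eq by (rule preimage[OF 1(1)])
    next
      case (2 v)
      then have eq: "set_of -` U \<inter> topspace ?P = {f \<in> topspace ?P. f v \<in> {False}}"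
        by (auto simp: set_of_def)
      show ?thesis
        unfolding eq by (rule preimage[OF 2(1)])
    next
      case 3
      then have eq: "set_of -` U \<inter> topspace ?P = topspace ?P"
        by (auto simp: set_of_def)
      show ?thesis
        unfolding eq by (rule openin_topspace)
    qed
  qed (auto simp: set_of_def cube_subbase_def)
  moreover have "set_of (ind C) = C" if "C \<in> Pow A" for C
    using that by (auto simp: set_of_def ind_def)
  moreover have "ind (set_of f) = f" if "f \<in> topspace ?P" for f
    using that by (auto simp: set_of_def ind_def PiE_def extensional_def fun_eq_iff)
  ultimately show ?thesis
    unfolding homeomorphic_space_def homeomorphic_maps_def
    by (intro exI[of _ ind] exI[of _ set_of]) auto
qed

lemma compact_space_cube: "compact_space (cube A)"
proof -
  have "compact_space (product_topology (\<lambda>_. discrete_topology (UNIV :: bool set)) A)"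
    by (simp add: compact_space_product_topology compact_space_discrete_topology)
  then show ?thesis
    using cube_homeomorphic_product homeomorphic_compact_space by blast
qed

section \<open>The zero-dimensional compactification of an SE-space in the cube\<close>

lemma strongly_point_finite_centered_finite:
  assumes "strongly_point_finite \<A>" "\<B> \<subseteq> \<A>"
    and centered: "\<And>\<C>. \<C> \<subseteq> \<B> \<Longrightarrow> finite \<C> \<Longrightarrow> \<C> \<noteq> {} \<Longrightarrow> \<Inter>\<C> \<noteq> {}"
  shows "finite \<B>"
proof (rule ccontr)
  assume "infinite \<B>"
  then obtain \<B>' where \<B>': "\<B>' \<subseteq> \<B>" "countable \<B>'" "infinite \<B>'"
    using infinite_countable_subset' by blast
  then have "\<B>' \<subseteq> \<A>"
    using assms(2) by blast
  then have "\<exists>\<C>\<subseteq>\<B>'. finite \<C> \<and> \<C> \<noteq> {} \<and> \<Inter>\<C> = {}"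
    using assms(1) \<B>'(2,3) unfolding strongly_point_finite_def by blast
  then show False
    using centered \<open>\<B>' \<subseteq> \<B>\<close> by blast
qed

locale SE_family =
  fixes X :: "'a topology" and \<A> :: "'a set set"
  assumes t0: "t0_space X"
    and clopen: "\<And>V. V \<in> \<A> \<Longrightarrow> closedin X V \<and> openin X V"
    and strongly_point_finite: "strongly_point_finite \<A>"
    and subbase: "subbase_of (\<A> \<union> {topspace X - V | V. V \<in> \<A>}) X"
begin

abbreviation clopen_subbase :: "'a set set" where
  "clopen_subbase \<equiv> \<A> \<union> {topspace X - V | V. V \<in> \<A>}"

definition members :: "'a \<Rightarrow> 'a set set" where
  "members x = {V \<in> \<A>. x \<in> V}"

definition cube_compactification :: "'a set set topology" where
  "cube_compactification = subtopology (cube \<A>) (cube \<A> closure_of (members ` topspace X))"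

lemma X_generated_by_subbase: "X = topology_generated_by clopen_subbase"
  using subbase unfolding subbase_of_def by auto

lemma family_subset: "V \<in> \<A> \<Longrightarrow> V \<subseteq> topspace X"
  using subbase unfolding subbase_of_def by auto

lemma members_in_cube: "members x \<in> Pow \<A>"
  unfolding members_def by auto

lemma finite_members: "finite (members x)"
  unfolding members_def
  by (rule strongly_point_finite_centered_finite[OF strongly_point_finite]) auto

lemma continuous_map_members: "continuous_map X (cube \<A>) members"
  unfolding cube_def
proof (rule continuous_on_generated_topo)
  fix U
  assume "U \<in> cube_subbase \<A>"
  then show "openin X (members -` U \<inter> topspace X)"
  proof (cases rule: cube_subbaseE)
    case (1 V)
    then have "members -` U \<inter> topspace X = V"
      using family_subset[of V] unfolding members_def by auto
    then show ?thesis
      using clopen 1 by simp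
  next
    case (2 V)
    then have "members -` U \<inter> topspace X = topspace X - V"
      unfolding members_def by auto
    then show ?thesis
      using clopen 2 by (simp add: closedin_def)
  next
    case 3
    then have "members -` U \<inter> topspace X = topspace X"
      using members_in_cube by auto
    then show ?thesis
      by simp
  qed
qed (use members_in_cube in \<open>auto simp: cube_subbase_def\<close>)

lemma members_eq_imp_same_open:
  assumes "members x = members y" "openin X U" "x \<in> U" "y \<in> topspace X"
  shows "y \<in> U"
proof -
  have "openin (topology_generated_by clopen_subbase) U"
    using assms(2) X_generated_by_subbase by simp
  then obtain \<F> where \<F>: "finite \<F>" "\<F> \<noteq> {}" "\<F> \<subseteq> clopen_subbase" "x \<in> \<Inter>\<F>" "\<Inter>\<F> \<subseteq> U"
    using assms(3) by (rule topology_generated_by_local_base)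
  have same: "x \<in> V \<longleftrightarrow> y \<in> V" if "V \<in> \<A>" for V
    using arg_cong[OF assms(1), of "\<lambda>M. V \<in> M"] that by (simp add: members_def)
  have "y \<in> S" if "S \<in> \<F>" for S
  proof -
    from that \<F>(3) consider "S \<in> \<A>" | V where "V \<in> \<A>" "S = topspace X - V"
      by blast
    then show ?thesis
    proof cases
      case 1
      then show ?thesis
        using same \<F>(4) that by blast
    next
      case (2 V)
      then show ?thesis
        using same[of V] \<F>(4) that assms(4) by blast
    qed
  qed
  then show ?thesis
    using \<F>(5) by blast
qed

lemma inj_on_members: "inj_on members (topspace X)"
proof (rule inj_onI, rule ccontr)
  fix x y
  assume xy: "x \<in> topspace X" "y \<in> topspace X" "members x = members y" "x \<noteq> y"
  then obtain U where U: "openin X U" "x \<in> U \<longleftrightarrow> y \<notin> U"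
    using t0 unfolding t0_space_def by blast
  show False
  proof (cases "x \<in> U")
    case True
    then show False
      using members_eq_imp_same_open[OF xy(3) U(1) True xy(2)] U(2) by blast
  next
    case False
    then have "y \<in> U"
      using U(2) by blast
    then show False
      using members_eq_imp_same_open[OF xy(3)[symmetric] U(1) _ xy(1)] False by blast
  qed
qed

lemma openin_members_image_subbase:
  assumes "S \<in> clopen_subbase"
  shows "openin (subtopology (cube \<A>) (members ` topspace X)) (members ` S)"
proof -
  consider "S \<in> \<A>" | V where "V \<in> \<A>" "S = topspace X - V"
    using assms by blast
  then obtain B where "openin (cube \<A>) B" "members ` S = B \<inter> members ` topspace X"
  proof cases
    case 1
    then have "members ` S = {\<C> \<in> Pow \<A>. S \<in> \<C>} \<inter> members ` topspace X"
      using family_subset[OF 1] members_in_cube unfolding members_def by auto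
    then show thesis
      using that openin_cube_mem[OF 1] by blast
  next
    case (2 V)
    then have "members ` S = {\<C> \<in> Pow \<A>. V \<notin> \<C>} \<inter> members ` topspace X"
      using members_in_cube unfolding members_def by auto
    then show thesis
      using that openin_cube_not_mem[OF 2(1)] by blast
  qed
  then show ?thesis
    by (auto simp: openin_subtopology)
qed

lemma open_map_members: "open_map X (subtopology (cube \<A>) (members ` topspace X)) members"
  unfolding open_map_def
proof (intro allI impI)
  fix U
  assume "openin X U"
  then have U: "openin (topology_generated_by clopen_subbase) U"
    using X_generated_by_subbase by simp
  show "openin (subtopology (cube \<A>) (members ` topspace X)) (members ` U)"
  proof (subst openin_subopen, intro ballI)
    fix y
    assume "y \<in> members ` U"
    then obtain x where x: "x \<in> U" "y = members x"
      by blast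
    obtain \<F> where \<F>: "finite \<F>" "\<F> \<noteq> {}" "\<F> \<subseteq> clopen_subbase" "x \<in> \<Inter>\<F>" "\<Inter>\<F> \<subseteq> U"
      using U x(1) by (rule topology_generated_by_local_base)
    obtain S0 where "S0 \<in> \<F>"
      using \<F>(2) by blast
    moreover have "\<forall>S\<in>\<F>. S \<subseteq> topspace X"
      using \<F>(3) family_subset by blast
    ultimately have "members ` \<Inter>\<F> = (\<Inter>S\<in>\<F>. members ` S)"
      using image_INT[OF inj_on_members, of \<F> "\<lambda>S. S" S0] by simp
    moreover have "openin (subtopology (cube \<A>) (members ` topspace X)) (members ` S)" if "S \<in> \<F>" for S
      using \<F>(3) that by (intro openin_members_image_subbase) blast
    then have "openin (subtopology (cube \<A>) (members ` topspace X)) (\<Inter>S\<in>\<F>. members ` S)"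
      using \<F>(1,2) by (intro openin_Inter) auto
    ultimately have "openin (subtopology (cube \<A>) (members ` topspace X)) (members ` \<Inter>\<F>)"
      by simp
    moreover have "y \<in> members ` \<Inter>\<F>"
      using \<F>(4) x(2) by blast
    moreover have "members ` \<Inter>\<F> \<subseteq> members ` U"
      using \<F>(5) by (rule image_mono)
    ultimately show "\<exists>T. openin (subtopology (cube \<A>) (members ` topspace X)) T \<and> y \<in> T \<and> T \<subseteq> members ` U"
      by blast
  qed
qed

lemma topspace_cube_compactification:
  "topspace cube_compactification = cube \<A> closure_of (members ` topspace X)"
  unfolding cube_compactification_def topspace_subtopology
  using closure_of_subset_topspace[of "cube \<A>"] by auto

lemma members_image_subset_cube_compactification: "members ` topspace X \<subseteq> topspace cube_compactification"
  unfolding topspace_cube_compactification using members_in_cube by (intro closure_of_subset) auto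

lemma cube_compactification_point_subset: "C \<in> topspace cube_compactification \<Longrightarrow> C \<subseteq> \<A>"
  using closure_of_subset_topspace unfolding topspace_cube_compactification by fastforce

lemma embedding_map_members: "embedding_map X cube_compactification members"
  unfolding embedding_map_def
proof (rule bijective_open_imp_homeomorphic_map)
  have sub: "subtopology cube_compactification (members ` topspace X) =
      subtopology (cube \<A>) (members ` topspace X)"
    using members_image_subset_cube_compactification
    unfolding cube_compactification_def topspace_cube_compactification subtopology_subtopology
    by (simp add: inf.absorb2)
  show "continuous_map X (subtopology cube_compactification (members ` topspace X)) members"
    unfolding sub by (simp add: continuous_map_in_subtopology continuous_map_members)
  show "open_map X (subtopology cube_compactification (members ` topspace X)) members"
    unfolding sub by (rule open_map_members)
qed (use members_image_subset_cube_compactification inj_on_members in auto)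

lemma zd_compactification_members: "zd_compactification X cube_compactification members"
  unfolding zd_compactification_def hausdorff_compactification_def zero_dim_embedded_def
proof (intro conjI embedding_map_members ballI allI impI)
  show "compact_space cube_compactification"
    unfolding cube_compactification_def
    by (simp add: closedin_compact_space compact_space_cube compact_space_subtopology)
  show "Hausdorff_space cube_compactification"
    unfolding cube_compactification_def by (simp add: Hausdorff_space_cube Hausdorff_space_subtopology)
  show "cube_compactification closure_of (members ` topspace X) = topspace cube_compactification"
    using members_image_subset_cube_compactification
    unfolding topspace_cube_compactification unfolding cube_compactification_def
    by (simp add: closure_of_subtopology_open)
next
  fix y U
  assume "openin cube_compactification U \<and> y \<in> U"
  then obtain U' where U': "openin (cube \<A>) U'" "U = U' \<inter> topspace cube_compactification" "y \<in> U"
    unfolding cube_compactification_def openin_subtopology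
      topspace_cube_compactification[unfolded cube_compactification_def]
    by auto
  then obtain W where W: "openin (cube \<A>) W" "closedin (cube \<A>) W" "y \<in> W" "W \<subseteq> U'"
    using cube_clopen_base by blast
  have "openin cube_compactification (W \<inter> topspace cube_compactification)"
    "closedin cube_compactification (W \<inter> topspace cube_compactification)"
    unfolding cube_compactification_def openin_subtopology closedin_subtopology
      topspace_cube_compactification[unfolded cube_compactification_def]
    using W by blast+
  moreover have "cube_compactification frontier_of (W \<inter> topspace cube_compactification) = {}"
    using calculation by (simp add: frontier_of_eq_empty openin_subset)
  ultimately show "\<exists>V. openin cube_compactification V \<and> y \<in> V \<and> V \<subseteq> U \<and>
      cube_compactification frontier_of V \<inter> (topspace cube_compactification - members ` topspace X) = {}"
    using W U' by blast
qed

lemma cube_compactification_point_centered: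
  assumes "C \<in> topspace cube_compactification" "finite \<F>" "\<F> \<noteq> {}" "\<F> \<subseteq> C"
  shows "\<Inter>\<F> \<noteq> {}"
proof -
  define T where "T = (\<Inter>V\<in>\<F>. {\<C> \<in> Pow \<A>. V \<in> \<C>})"
  have "\<F> \<subseteq> \<A>"
    using cube_compactification_point_subset assms by blast
  have "openin (cube \<A>) {\<C> \<in> Pow \<A>. V \<in> \<C>}" if "V \<in> \<F>" for V
    using that \<open>\<F> \<subseteq> \<A>\<close> by (intro openin_cube_mem) blast
  then have "openin (cube \<A>) T"
    unfolding T_def using assms(2,3) by (intro openin_Inter) auto
  moreover have "C \<in> T"
    unfolding T_def using assms(1,4) cube_compactification_point_subset by auto
  ultimately obtain x where "x \<in> topspace X" "members x \<in> T"
    using assms(1) unfolding topspace_cube_compactification in_closure_of by blast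
  then have "x \<in> \<Inter>\<F>"
    using assms(3) unfolding T_def members_def by auto
  then show ?thesis
    by blast
qed

lemma finite_cube_compactification_point:
  assumes "C \<in> topspace cube_compactification"
  shows "finite C"
proof (rule strongly_point_finite_centered_finite[OF strongly_point_finite])
  show "C \<subseteq> \<A>"
    using assms by (rule cube_compactification_point_subset)
  show "\<Inter>\<F> \<noteq> {}" if "\<F> \<subseteq> C" "finite \<F>" "\<F> \<noteq> {}" for \<F>
    using cube_compactification_point_centered[OF assms] that by blast
qed

lemma cube_compactification_point_nonempty:
  "C \<in> topspace cube_compactification \<Longrightarrow> V \<in> C \<Longrightarrow> V \<noteq> {}"
  using cube_compactification_point_centered[of C "{V}"] by auto

end

section \<open>Separating the points of a second countable subspace\<close>

lemma regular_space_closure_nbhd: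
  assumes "regular_space K" "openin K U0" "x \<in> U0"
  obtains U where "openin K U" "x \<in> U" "K closure_of U \<subseteq> U0"
proof -
  have "closedin K (topspace K - U0)" "x \<in> topspace K - (topspace K - U0)"
    using assms(2,3) openin_subset by fastforce+
  then obtain U where "openin K U" "x \<in> U" "disjnt (topspace K - U0) (K closure_of U)"
    using assms(1) unfolding regular_space by blast
  then show thesis
    using that closure_of_subset_topspace[of K U] by (auto simp: disjnt_def)
qed

lemma regular_space_base_pair:
  assumes K: "Hausdorff_space K" "regular_space K"
    and base: "\<And>U x. openin (subtopology K R) U \<Longrightarrow> x \<in> U \<Longrightarrow> \<exists>B\<in>\<B>. x \<in> B \<and> B \<subseteq> U"
    and pq: "p \<in> topspace K \<inter> R" "q \<in> topspace K \<inter> R" "p \<noteq> q"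
  obtains B1 B2 where "B1 \<in> \<B>" "B2 \<in> \<B>" "p \<in> B1" "q \<in> B2" "disjnt (K closure_of B1) (K closure_of B2)"
proof -
  obtain U0 W0 where UW: "openin K U0" "openin K W0" "p \<in> U0" "q \<in> W0" "disjnt U0 W0"
    using K(1) pq unfolding Hausdorff_space_def by blast
  obtain U where U: "openin K U" "p \<in> U" "K closure_of U \<subseteq> U0"
    using regular_space_closure_nbhd[OF K(2) UW(1,3)] by blast
  obtain W where W: "openin K W" "q \<in> W" "K closure_of W \<subseteq> W0"
    using regular_space_closure_nbhd[OF K(2) UW(2,4)] by blast
  obtain B1 where B1: "B1 \<in> \<B>" "p \<in> B1" "B1 \<subseteq> U"
    using base[of "U \<inter> R" p] U pq openin_subtopology_Int[OF U(1)] by blast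
  obtain B2 where B2: "B2 \<in> \<B>" "q \<in> B2" "B2 \<subseteq> W"
    using base[of "W \<inter> R" q] W pq openin_subtopology_Int[OF W(1)] by blast
  have "K closure_of B1 \<subseteq> U0" "K closure_of B2 \<subseteq> W0"
    using closure_of_mono[of B1 U K] closure_of_mono[of B2 W K] B1 B2 U W by auto
  then have "disjnt (K closure_of B1) (K closure_of B2)"
    using UW(5) unfolding disjnt_def by blast
  then show thesis
    using that B1 B2 by blast
qed

lemma second_countable_separating_pairs:
  assumes K: "Hausdorff_space K" "regular_space K" and R: "second_countable (subtopology K R)"
  obtains P where "countable P" "\<And>B1 B2. (B1, B2) \<in> P \<Longrightarrow> disjnt (K closure_of B1) (K closure_of B2)"
    "\<And>p q. p \<in> topspace K \<inter> R \<Longrightarrow> q \<in> topspace K \<inter> R \<Longrightarrow> p \<noteq> q \<Longrightarrow>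
      \<exists>B1 B2. (B1, B2) \<in> P \<and> p \<in> B1 \<and> q \<in> B2"
proof -
  obtain \<B> where "countable \<B>"
    and "\<forall>U x. openin (subtopology K R) U \<and> x \<in> U \<longrightarrow> (\<exists>B\<in>\<B>. x \<in> B \<and> B \<subseteq> U)"
    using R unfolding second_countable_def by blast
  then have \<B>: "countable \<B>"
    "\<And>U x. openin (subtopology K R) U \<Longrightarrow> x \<in> U \<Longrightarrow> \<exists>B\<in>\<B>. x \<in> B \<and> B \<subseteq> U"
    by blast+
  define P where "P = {(B1, B2). B1 \<in> \<B> \<and> B2 \<in> \<B> \<and> disjnt (K closure_of B1) (K closure_of B2)}"
  have "countable P"
    using countable_subset[of P "\<B> \<times> \<B>"] \<B>(1) unfolding P_def by auto
  moreover have "disjnt (K closure_of B1) (K closure_of B2)" if "(B1, B2) \<in> P" for B1 B2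
    using that unfolding P_def by simp
  moreover have "\<exists>B1 B2. (B1, B2) \<in> P \<and> p \<in> B1 \<and> q \<in> B2"
    if pq: "p \<in> topspace K \<inter> R" "q \<in> topspace K \<inter> R" "p \<noteq> q" for p q
  proof -
    obtain B1 B2 where "B1 \<in> \<B>" "B2 \<in> \<B>" "p \<in> B1" "q \<in> B2"
      "disjnt (K closure_of B1) (K closure_of B2)"
      using regular_space_base_pair[OF K \<B>(2) pq] by blast
    then show ?thesis
      unfolding P_def by blast
  qed
  ultimately show thesis
    by (rule that)
qed

text \<open>A compact Hausdorff space is normal, so Urysohn functions for the countably many
  separating pairs separate the points of R.\<close>

lemma second_countable_separating_functions:
  assumes K: "compact_space K" "Hausdorff_space K" and R: "second_countable (subtopology K R)"
  obtains h :: "nat \<Rightarrow> 'a \<Rightarrow> real" where "\<And>n. continuous_map K (top_of_set {0..1::real}) (h n)"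
    "\<And>p q. p \<in> topspace K \<inter> R \<Longrightarrow> q \<in> topspace K \<inter> R \<Longrightarrow> p \<noteq> q \<Longrightarrow> \<exists>n. h n p \<noteq> h n q"
proof -
  obtain P where P: "countable P" "\<And>B1 B2. (B1, B2) \<in> P \<Longrightarrow> disjnt (K closure_of B1) (K closure_of B2)"
    "\<And>p q. p \<in> topspace K \<inter> R \<Longrightarrow> q \<in> topspace K \<inter> R \<Longrightarrow> p \<noteq> q \<Longrightarrow>
      \<exists>B1 B2. (B1, B2) \<in> P \<and> p \<in> B1 \<and> q \<in> B2"
    using second_countable_separating_pairs[OF K(2) compact_Hausdorff_imp_regular_space[OF K] R]
    by blast
  have ex: "\<forall>b\<in>P. \<exists>f. continuous_map K (top_of_set {0..1::real}) f \<and>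
      f ` (K closure_of fst b) \<subseteq> {0} \<and> f ` (K closure_of snd b) \<subseteq> {1}"
  proof
    fix b
    assume "b \<in> P"
    have "normal_space K"
      using K by (simp add: compact_Hausdorff_or_regular_imp_normal_space)
    moreover have "disjnt (K closure_of fst b) (K closure_of snd b)"
      using P(2)[of "fst b" "snd b"] \<open>b \<in> P\<close> by simp
    ultimately obtain f :: "'a \<Rightarrow> real" where "continuous_map K (top_of_set {0..1::real}) f"
      "f ` (K closure_of fst b) \<subseteq> {0}" "f ` (K closure_of snd b) \<subseteq> {1}"
      by (rule Urysohn_lemma[OF _ closedin_closure_of closedin_closure_of _ zero_le_one])
    then show "\<exists>f. continuous_map K (top_of_set {0..1::real}) f \<and>
        f ` (K closure_of fst b) \<subseteq> {0} \<and> f ` (K closure_of snd b) \<subseteq> {1}"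
      by blast
  qed
  obtain u where u: "\<forall>b\<in>P. continuous_map K (top_of_set {0..1::real}) (u b) \<and>
      u b ` (K closure_of fst b) \<subseteq> {0} \<and> u b ` (K closure_of snd b) \<subseteq> {1}"
    by (rule exE[OF bchoice[OF ex]])
  have sep: "\<exists>b\<in>P. u b p \<noteq> u b q"
    if pq: "p \<in> topspace K \<inter> R" "q \<in> topspace K \<inter> R" "p \<noteq> q" for p q
  proof -
    obtain B1 B2 where B: "(B1, B2) \<in> P" "p \<in> B1" "q \<in> B2"
      using P(3)[OF pq] by blast
    moreover have "p \<in> K closure_of B1" "q \<in> K closure_of B2"
      using B pq by (auto intro: closure_of_subset_Int[THEN subsetD])
    ultimately have "u (B1, B2) p = 0" "u (B1, B2) q = 1"
      using u by fastforce+
    then show ?thesis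
      using B(1) by force
  qed
  show thesis
  proof (cases "P = {}")
    case True
    then show thesis
      using that[of "\<lambda>_ _. 0"] sep by auto
  next
    case False
    show thesis
    proof (rule that[of "\<lambda>n. u (from_nat_into P n)"])
      show "continuous_map K (top_of_set {0..1::real}) (u (from_nat_into P n))" for n
        using u from_nat_into[OF False, of n] by blast
      show "\<exists>n. u (from_nat_into P n) p \<noteq> u (from_nat_into P n) q"
        if pq: "p \<in> topspace K \<inter> R" "q \<in> topspace K \<inter> R" "p \<noteq> q" for p q
      proof -
        obtain b where "b \<in> P" "u b p \<noteq> u b q"
          using sep[OF pq] by blast
        moreover obtain n where "from_nat_into P n = b"
          using from_nat_into_surj[OF \<open>countable P\<close> \<open>b \<in> P\<close>] by blast
        ultimately show ?thesis
          by blast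
      qed
    qed
  qed
qed

section \<open>The Freudenthal compactification of an SE-space\<close>

unbundle cardinal_syntax

locale SE_freudenthal = SE_family X \<A> for X :: "'a topology" and \<A> +
  fixes FX :: "'b topology" and e :: "'a \<Rightarrow> 'b"
  assumes freudenthal: "freudenthal_compactification X FX e"
begin

lemma compactification_FX:
  "compact_space FX" "Hausdorff_space FX" "embedding_map X FX e"
  "FX closure_of (e ` topspace X) = topspace FX"
  using freudenthal unfolding freudenthal_compactification_def zd_compactification_def
    hausdorff_compactification_def by auto

lemma continuous_map_e: "continuous_map X FX e"
proof -
  have "continuous_map X (subtopology FX (e ` topspace X)) e"
    using compactification_FX(3) unfolding embedding_map_def by (rule homeomorphic_imp_continuous_map)
  then show ?thesis
    by (simp add: continuous_map_in_subtopology)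
qed

lemma inj_on_e: "inj_on e (topspace X)"
  using compactification_FX(3) unfolding embedding_map_def homeomorphic_map_def by auto

text \<open>The maximality of FX among zero-dimensional compactifications yields the map
  proj: FX \<rightarrow> cube_compactification extending members.\<close>

definition proj :: "'b \<Rightarrow> 'a set set" where
  "proj = (SOME g. continuous_map FX cube_compactification g \<and> (\<forall>x. g (e x) = members x))"

lemma proj: "continuous_map FX cube_compactification proj" "proj (e x) = members x"
proof -
  have "\<exists>g. continuous_map FX cube_compactification g \<and> (\<forall>x. g (e x) = members x)"
    using freudenthal zd_compactification_members
    unfolding freudenthal_compactification_def compactification_ge_def by blast
  then have "continuous_map FX cube_compactification proj \<and> (\<forall>x. proj (e x) = members x)"
    unfolding proj_def by (rule someI_ex)
  then show "continuous_map FX cube_compactification proj" "proj (e x) = members x"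
    by auto
qed

lemma proj_in_cube_compactification: "p \<in> topspace FX \<Longrightarrow> proj p \<in> topspace cube_compactification"
  using proj(1) by (simp add: continuous_map_def Pi_iff)

text \<open>If a remainder point p had proj p = members x, then p and e x would have disjoint
  neighbourhoods U and W; but the preimage under proj of the trace of W on X is a neighbourhood
  of p that meets e ` X only inside W.\<close>

lemma proj_in_members_image:
  assumes p: "p \<in> topspace FX" and "proj p \<in> members ` topspace X"
  shows "p \<in> e ` topspace X"
proof (rule ccontr)
  assume np: "p \<notin> e ` topspace X"
  obtain x where x: "x \<in> topspace X" "proj p = members x"
    using assms(2) by blast
  have "e x \<in> topspace FX" "p \<noteq> e x"
    using continuous_map_e x(1) np by (auto simp: continuous_map_def)
  then obtain U W where UW: "openin FX U" "openin FX W" "p \<in> U" "e x \<in> W" "disjnt U W"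
    using compactification_FX(2) p unfolding Hausdorff_space_def by blast
  define N where "N = {z \<in> topspace X. e z \<in> W}"
  have "openin X N"
    unfolding N_def using continuous_map_e UW(2) by (rule openin_continuous_map_preimage)
  then have "openin (subtopology cube_compactification (members ` topspace X)) (members ` N)"
    using embedding_map_members unfolding embedding_map_def by (simp add: homeomorphic_map_openness_eq)
  then obtain Ob where Ob: "openin cube_compactification Ob" "members ` N = Ob \<inter> members ` topspace X"
    unfolding openin_subtopology by blast
  define G where "G = {q \<in> topspace FX. proj q \<in> Ob}"
  have "openin FX G"
    unfolding G_def using proj(1) Ob(1) by (rule openin_continuous_map_preimage)
  moreover have "p \<in> G"
    using Ob x p UW unfolding G_def N_def by auto
  moreover have "p \<in> FX closure_of (e ` topspace X)"
    using compactification_FX(4) p by simp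
  ultimately obtain z where "z \<in> e ` topspace X" "z \<in> U \<inter> G"
    using UW(1,3) unfolding in_closure_of by (meson IntI openin_Int)
  then obtain y where y: "y \<in> topspace X" "e y \<in> U \<inter> G"
    by blast
  then have "members y \<in> members ` N"
    using Ob proj(2) unfolding G_def by auto
  then have "y \<in> N"
    using inj_on_members y(1) unfolding N_def by (auto simp: inj_on_def)
  then show False
    using y UW(5) unfolding N_def by (auto simp: disjnt_def)
qed

definition coordinate_index :: "('a set + nat) set" where
  "coordinate_index = {V \<in> \<A>. V \<noteq> {}} <+> UNIV"

text \<open>The indicators of V \<in> proj p separate the points of FX with different images in the
  cube; scaling h n by 1/(n+1) leaves only finitely many coordinates above any \<epsilon> > 0 at each
  point.\<close>

definition coordinate :: "(nat \<Rightarrow> 'b \<Rightarrow> real) \<Rightarrow> 'a set + nat \<Rightarrow> 'b \<Rightarrow> real" where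
  "coordinate h \<gamma> p = (case \<gamma> of Inl V \<Rightarrow> if V \<in> proj p then 1 else 0 | Inr n \<Rightarrow> h n p / Suc n)"

context
  fixes h :: "nat \<Rightarrow> 'b \<Rightarrow> real"
  assumes h: "\<And>n. continuous_map FX (top_of_set {0..1::real}) (h n)"
begin

lemma h_range: "p \<in> topspace FX \<Longrightarrow> h n p \<in> {0..1}"
  using h[of n] by (auto simp: continuous_map_def)

lemma continuous_map_coordinate: "continuous_map FX euclideanreal (coordinate h \<gamma>)"
proof (cases \<gamma>)
  case (Inl V)
  define S where "S = {C \<in> topspace cube_compactification. V \<in> C}"
  have "openin cube_compactification S \<and> closedin cube_compactification S"
  proof (cases "V \<in> \<A>")
    case True
    have "S = {C \<in> Pow \<A>. V \<in> C} \<inter> topspace cube_compactification"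
      unfolding S_def using cube_compactification_point_subset by auto
    then show ?thesis
      using openin_cube_mem[OF True] closedin_cube_mem[OF True]
      unfolding cube_compactification_def openin_subtopology closedin_subtopology
        topspace_cube_compactification[unfolded cube_compactification_def]
      by blast
  next
    case False
    then have "S = {}"
      unfolding S_def using cube_compactification_point_subset by auto
    then show ?thesis
      by simp
  qed
  then have "continuous_map FX euclideanreal ((\<lambda>C. if C \<in> S then 1 else 0) \<circ> proj)"
    using continuous_map_compose[OF proj(1) continuous_map_clopen_indicator] by blast
  then show ?thesis
    by (rule continuous_map_eq)
      (use proj_in_cube_compactification in \<open>auto simp: Inl coordinate_def S_def\<close>)
next
  case (Inr n)
  have "continuous_map FX euclideanreal (h n)"
    using h[of n] by (simp add: continuous_map_in_subtopology)
  then have "continuous_map FX euclideanreal (\<lambda>p. inverse (Suc n) * h n p)"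
    by (rule continuous_map_real_mult_left)
  then show ?thesis
    by (rule continuous_map_eq) (simp add: Inr coordinate_def field_simps)
qed

lemma coordinate_bounded:
  assumes "p \<in> topspace FX"
  shows "\<bar>coordinate h \<gamma> p\<bar> \<le> 1"
proof (cases \<gamma>)
  case (Inr n)
  have "0 \<le> h n p" "h n p \<le> 1"
    using h_range[OF assms] by auto
  then show ?thesis
    by (auto simp: Inr coordinate_def divide_le_eq)
qed (simp add: coordinate_def)

lemma finite_large_coordinates:
  assumes p: "p \<in> topspace FX" and "\<epsilon> > 0"
  shows "finite {\<gamma> \<in> coordinate_index. \<epsilon> \<le> \<bar>coordinate h \<gamma> p\<bar>}"
proof -
  obtain N :: nat where N: "1 / \<epsilon> < N"
    using reals_Archimedean2 by blast
  have "\<gamma> \<in> Inl ` proj p \<union> Inr ` {..<N}" if "\<epsilon> \<le> \<bar>coordinate h \<gamma> p\<bar>" for \<gamma>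
  proof (cases \<gamma>)
    case (Inl V)
    then show ?thesis
      using that \<open>\<epsilon> > 0\<close> by (auto simp: coordinate_def split: if_splits)
  next
    case (Inr n)
    have "0 \<le> h n p" "h n p \<le> 1"
      using h_range[OF p] by auto
    then have "\<epsilon> \<le> h n p / Suc n"
      using that by (simp add: Inr coordinate_def)
    then have "\<epsilon> * Suc n \<le> h n p"
      by (simp add: le_divide_eq)
    then have "\<epsilon> + \<epsilon> * real n \<le> h n p"
      by (simp add: distrib_left)
    then have "\<epsilon> * real n < 1"
      using \<open>h n p \<le> 1\<close> \<open>\<epsilon> > 0\<close> by linarith
    then have "real n < 1 / \<epsilon>"
      using \<open>\<epsilon> > 0\<close> by (simp add: less_divide_eq mult.commute)
    then have "real n < real N"
      using N by linarith
    then show ?thesis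
      using Inr by simp
  qed
  then have "{\<gamma> \<in> coordinate_index. \<epsilon> \<le> \<bar>coordinate h \<gamma> p\<bar>} \<subseteq> Inl ` proj p \<union> Inr ` {..<N}"
    by blast
  moreover have "finite (Inl ` proj p \<union> Inr ` {..<N})"
    using finite_cube_compactification_point[OF proj_in_cube_compactification[OF p]] by simp
  ultimately show ?thesis
    by (rule finite_subset)
qed

lemma coordinates_separating:
  assumes p: "p \<in> topspace FX" and q: "q \<in> topspace FX" and "p \<noteq> q"
    and sep: "\<And>p q. p \<in> topspace FX - e ` topspace X \<Longrightarrow> q \<in> topspace FX - e ` topspace X \<Longrightarrow>
      p \<noteq> q \<Longrightarrow> \<exists>n. h n p \<noteq> h n q"
  shows "\<exists>\<gamma>\<in>coordinate_index. coordinate h \<gamma> p \<noteq> coordinate h \<gamma> q"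
proof (cases "proj p = proj q")
  case False
  then obtain V where V: "V \<in> proj p \<longleftrightarrow> V \<notin> proj q"
    by blast
  then have "Inl V \<in> coordinate_index"
    using cube_compactification_point_subset cube_compactification_point_nonempty
      proj_in_cube_compactification p q
    unfolding coordinate_index_def by blast
  then show ?thesis
    using V by (intro bexI[of _ "Inl V"]) (auto simp: coordinate_def)
next
  case True
  have "p \<notin> e ` topspace X"
  proof
    assume "p \<in> e ` topspace X"
    then obtain x where x: "x \<in> topspace X" "p = e x"
      by blast
    then have "proj q \<in> members ` topspace X"
      using True proj(2) by auto
    then obtain y where y: "y \<in> topspace X" "q = e y"
      using proj_in_members_image[OF q] by blast
    then have "members x = members y"
      using True x proj(2) by simp
    then show False
      using inj_on_members x y \<open>p \<noteq> q\<close> by (auto simp: inj_on_def)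
  qed
  moreover have "q \<notin> e ` topspace X"
  proof
    assume "q \<in> e ` topspace X"
    then have "proj p \<in> members ` topspace X"
      using True proj(2) by auto
    then show False
      using proj_in_members_image[OF p] \<open>p \<notin> e ` topspace X\<close> by blast
  qed
  ultimately obtain n where "h n p \<noteq> h n q"
    using sep p q \<open>p \<noteq> q\<close> by blast
  then show ?thesis
    by (intro bexI[of _ "Inr n"]) (auto simp: coordinate_def coordinate_index_def)
qed

end

text \<open>Every nonempty V \<in> \<A> contains a point of X, and each point lies in only finitely many
  V, so the index set is no larger than an infinite FX.\<close>

lemma coordinate_index_embeds:
  assumes "infinite (topspace FX)"
  obtains \<iota> :: "'a set + nat \<Rightarrow> 'b" where "inj_on \<iota> coordinate_index"
proof -
  let ?T = "topspace FX"
  have nat_le: "|UNIV :: nat set| \<le>o |?T|"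
    using assms by (simp add: infinite_iff_card_of_nat)
  have "|topspace X| \<le>o |?T|"
    using inj_on_e continuous_map_e by (intro card_of_ordLeqI[of e]) (auto simp: continuous_map_def)
  moreover have "\<forall>x\<in>topspace X. |members x| \<le>o |?T|"
  proof
    fix x
    have "|members x| <o |?T|"
      by (rule finite_ordLess_infinite[OF card_of_Well_order card_of_Well_order])
        (simp_all only: Field_card_of finite_members assms not_False_eq_True)
    then show "|members x| \<le>o |?T|"
      by (rule ordLess_imp_ordLeq)
  qed
  ultimately have "|\<Union>x\<in>topspace X. members x| \<le>o |?T|"
    by (rule card_of_UNION_ordLeq_infinite[OF assms])
  moreover have "{V \<in> \<A>. V \<noteq> {}} \<subseteq> (\<Union>x\<in>topspace X. members x)"
    using family_subset unfolding members_def by blast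
  ultimately have "|{V \<in> \<A>. V \<noteq> {}}| \<le>o |?T|"
    using card_of_mono1 ordLeq_transitive by blast
  moreover have "infinite (Field (card_of ?T))"
    using assms by (simp add: Field_card_of)
  ultimately have "|coordinate_index| \<le>o |?T|"
    unfolding coordinate_index_def
    using card_of_Plus_ordLeq_infinite_Field[OF _ _ nat_le card_of_Card_order] by blast
  then show thesis
    using that unfolding card_of_ordLeq[symmetric] by blast
qed

lemma eberlein_compact_FX:
  fixes h :: "nat \<Rightarrow> 'b \<Rightarrow> real"
  assumes h: "\<And>n. continuous_map FX (top_of_set {0..1::real}) (h n)"
    and sep: "\<And>p q. p \<in> topspace FX - e ` topspace X \<Longrightarrow> q \<in> topspace FX - e ` topspace X \<Longrightarrow>
      p \<noteq> q \<Longrightarrow> \<exists>n. h n p \<noteq> h n q"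
  shows "eberlein_compact FX"
proof (cases "finite (topspace FX)")
  case True
  then show ?thesis
    using compactification_FX(2) by (rule eberlein_compact_finite)
next
  case False
  then obtain \<iota> :: "'a set + nat \<Rightarrow> 'b" where \<iota>: "inj_on \<iota> coordinate_index"
    using coordinate_index_embeds by blast
  show ?thesis
  proof (rule eberlein_compactI[OF compactification_FX(1,2) \<iota>])
    show "continuous_map FX euclideanreal (coordinate h \<gamma>)" for \<gamma>
      by (rule continuous_map_coordinate[OF h])
    show "\<bar>coordinate h \<gamma> p\<bar> \<le> 1" if "p \<in> topspace FX" for \<gamma> p
      using that by (rule coordinate_bounded[OF h])
    show "finite {\<gamma> \<in> coordinate_index. \<epsilon> \<le> \<bar>coordinate h \<gamma> p\<bar>}"
      if "p \<in> topspace FX" "\<epsilon> > 0" for p \<epsilon>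
      using that by (rule finite_large_coordinates[OF h])
    show "\<exists>\<gamma>\<in>coordinate_index. coordinate h \<gamma> p \<noteq> coordinate h \<gamma> q"
      if "p \<in> topspace FX" "q \<in> topspace FX" "p \<noteq> q" for p q
      using that sep by (rule coordinates_separating[OF h])
  qed
qed

end

theorem corollary4p16:
  fixes X :: "'a topology" and FX :: "'b topology" and e :: "'a \<Rightarrow> 'b"
  assumes "SE_space X"
    and "freudenthal_compactification X FX e"
    and "second_countable (subtopology FX (topspace FX - e ` topspace X))"
  shows "eberlein_compact FX"
proof -
  obtain \<A> where "SE_freudenthal X \<A> FX e"
    using assms(1,2) unfolding SE_space_def SE_freudenthal_def SE_family_def SE_freudenthal_axioms_def
    by blast
  then interpret SE_freudenthal X \<A> FX e .
  show ?thesis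
  proof (rule second_countable_separating_functions[OF compactification_FX(1,2) assms(3)])
    fix h :: "nat \<Rightarrow> 'b \<Rightarrow> real"
    assume h: "\<And>n. continuous_map FX (top_of_set {0..1::real}) (h n)"
      and sep: "\<And>p q. p \<in> topspace FX \<inter> (topspace FX - e ` topspace X) \<Longrightarrow>
        q \<in> topspace FX \<inter> (topspace FX - e ` topspace X) \<Longrightarrow> p \<noteq> q \<Longrightarrow> \<exists>n. h n p \<noteq> h n q"
    show ?thesis
    proof (rule eberlein_compact_FX[OF h])
      fix p q
      assume "p \<in> topspace FX - e ` topspace X" "q \<in> topspace FX - e ` topspace X" "p \<noteq> q"
      then show "\<exists>n. h n p \<noteq> h n q"
        using sep by blast
    qed
  qed
qed

end
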